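(* Let $\phi\in\Phi$, $f:\mathbb{R}^{n_1\times n_2}\to(-\infty,+\infty]$ proper lsc, $\Omega\subseteq\mathbb{R}^{n_1\times n_2}$ closed ($n_1\le n_2$), $\delta>0$, and suppose $\min_X\{\mathrm{rank}(X): f(X)\le\delta,\ X\in\Omega\}$ has a nonempty global optimal solution set. Consider $$\textstyle (Q)\ \min_{X,W\in\mathbb{R}^{n_1\times n_2}}\Big\{\sum_{i=1}^{n_1}\phi(\sigma_i(W)):\ \|X\|_*-\langle W,X\rangle=0,\ \|W\|\le1,\ X\in\Omega,\ f(X)\le\delta\Big\}.$$ If $X^*=U^*[\mathrm{Diag}(\sigma(X^* ))\ \ 0](V^* )^T$ (an SVD) is globally optimal for the rank minimization problem, then $(X^*,\,U_1^*(V_1^* )^T+t^*U_2^*[\mathrm{Diag}(e)\ \ 0](V_2^* )^T)$ is globally optimal for $(Q)$; conversely, if $(X^*,W^* )$ is globally optimal for $(Q)$, then $X^*$ is globally optimal for the rank minimization problem.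
   Context: $\Phi$ is the family of proper lsc functions $\phi:\mathbb{R}\to(-\infty,+\infty]$ with $\mathrm{int}(\mathrm{dom}\,\phi)\supseteq[0,1]$, convex on $[0,1]$, such that $\min_{t\in[0,1]}\phi(t)=0$ is attained at a (fixed) point $t^*\in[0,1)$, and $\phi(1)=1$. $\sigma(X)\in\mathbb{R}^{n_1}$ is the vector of singular values in nonincreasing order; $\|X\|_*$ nuclear norm, $\|X\|$ spectral norm, $\langle\cdot,\cdot\rangle$ trace inner product. For $X$ with SVD $U[\mathrm{Diag}(\sigma(X))\ 0]V^T$ and $r=\mathrm{rank}(X)$, $U_1,V_1$ are the first $r$ columns of $U,V$, and $U_2,V_2$ are the last $n_1-r$ and $n_2-r$ columns of $U,V$ respectively; $e$ is the all-ones vector of length $n_1-r$. *)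

theory Defs
  imports "HOL-Analysis.Analysis" "Jordan_Normal_Form.DL_Rank"
begin

text \<open>Matrices are Jordan_Normal_Form matrices of type real mat, restricted to
  carrier_mat n1 n2.  Rank is the library rank (dimension of the column space).\<close>

definition mrank :: "real mat \<Rightarrow> nat" where
  "mrank X = vec_space.rank (dim_row X) X"

definition orth_mat :: "nat \<Rightarrow> real mat \<Rightarrow> bool" where
  "orth_mat n U \<longleftrightarrow> U \<in> carrier_mat n n \<and> transpose_mat U * U = 1\<^sub>m n"

definition rect_diag :: "nat \<Rightarrow> nat \<Rightarrow> (nat \<Rightarrow> real) \<Rightarrow> real mat" where
  "rect_diag m n s = mat m n (\<lambda>(i,j). if i = j then s i else 0)"

definition is_svd :: "nat \<Rightarrow> nat \<Rightarrow> real mat \<Rightarrow> real mat \<Rightarrow> (nat \<Rightarrow> real) \<Rightarrow> real mat \<Rightarrow> bool" where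
  "is_svd m n X U s V \<longleftrightarrow> X \<in> carrier_mat m n \<and> orth_mat m U \<and> orth_mat n V \<and>
     (\<forall>i<m. 0 \<le> s i) \<and> (\<forall>i j. i \<le> j \<longrightarrow> j < m \<longrightarrow> s j \<le> s i) \<and>
     (\<forall>i. m \<le> i \<longrightarrow> s i = 0) \<and>
     X = U * rect_diag m n s * transpose_mat V"

text \<open>singular values sigma(X) (indices 0..m-1, value 0 outside), uniquely determined by any SVD\<close>
definition sing_vals :: "real mat \<Rightarrow> nat \<Rightarrow> real" where
  "sing_vals X = (THE s. \<exists>U V. is_svd (dim_row X) (dim_col X) X U s V)"

definition nuc_norm :: "real mat \<Rightarrow> real" where
  "nuc_norm X = (\<Sum>i<dim_row X. sing_vals X i)"

definition spec_norm :: "real mat \<Rightarrow> real" where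
  "spec_norm X = (if dim_row X = 0 then 0 else sing_vals X 0)"

definition mat_inner :: "real mat \<Rightarrow> real mat \<Rightarrow> real" where
  "mat_inner W X = (\<Sum>i<dim_row X. \<Sum>j<dim_col X. W $$ (i,j) * X $$ (i,j))"

definition col_block :: "real mat \<Rightarrow> nat \<Rightarrow> nat \<Rightarrow> real mat" where
  "col_block A a b = mat (dim_row A) (b - a) (\<lambda>(i,j). A $$ (i, a + j))"

text \<open>Topology on R^{m x n}: entrywise convergence (the Euclidean topology).\<close>
definition mat_tendsto :: "nat \<Rightarrow> nat \<Rightarrow> (nat \<Rightarrow> real mat) \<Rightarrow> real mat \<Rightarrow> bool" where
  "mat_tendsto m n Xs X \<longleftrightarrow> (\<forall>i<m. \<forall>j<n. (\<lambda>k. Xs k $$ (i,j)) \<longlonglongrightarrow> X $$ (i,j))"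

definition mat_closed :: "nat \<Rightarrow> nat \<Rightarrow> real mat set \<Rightarrow> bool" where
  "mat_closed m n \<Omega> \<longleftrightarrow> \<Omega> \<subseteq> carrier_mat m n \<and>
     (\<forall>Xs X. (\<forall>k. Xs k \<in> \<Omega>) \<longrightarrow> X \<in> carrier_mat m n \<longrightarrow> mat_tendsto m n Xs X \<longrightarrow> X \<in> \<Omega>)"

definition mat_proper_lsc :: "nat \<Rightarrow> nat \<Rightarrow> (real mat \<Rightarrow> ereal) \<Rightarrow> bool" where
  "mat_proper_lsc m n f \<longleftrightarrow>
     (\<forall>X\<in>carrier_mat m n. f X \<noteq> -\<infinity>) \<and> (\<exists>X\<in>carrier_mat m n. f X \<noteq> \<infinity>) \<and>
     (\<forall>Xs X. (\<forall>k. Xs k \<in> carrier_mat m n) \<longrightarrow> X \<in> carrier_mat m n \<longrightarrow>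
        mat_tendsto m n Xs X \<longrightarrow> f X \<le> liminf (\<lambda>k. f (Xs k)))"

text \<open>The class Phi, with the fixed minimizer t*\<close>
definition Phi_class :: "(real \<Rightarrow> ereal) \<Rightarrow> real \<Rightarrow> bool" where
  "Phi_class \<phi> ts \<longleftrightarrow>
     (\<forall>t. \<phi> t \<noteq> -\<infinity>) \<and> (\<exists>t. \<phi> t \<noteq> \<infinity>) \<and>
     (\<forall>t xs. xs \<longlonglongrightarrow> t \<longrightarrow> \<phi> t \<le> liminf (\<lambda>k. \<phi> (xs k))) \<and>
     {0..1} \<subseteq> interior {t. \<phi> t \<noteq> \<infinity>} \<and>
     convex_on {0..1} (\<lambda>t. real_of_ereal (\<phi> t)) \<and>
     ts \<in> {0..<1} \<and> \<phi> ts = 0 \<and> (\<forall>t\<in>{0..1}. 0 \<le> \<phi> t) \<and>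
     \<phi> 1 = 1"

end

theory Submission
  imports Defs "Jordan_Normal_Form.Spectral_Radius" "HOL-Combinatorics.Permutations"
begin

text \<open>Every feasible pair \<open>(X, W)\<close> of (Q) has objective at least \<open>rank X\<close>: since \<open>\<phi> \<ge> 0\<close> on
  \<open>[0,1]\<close> and \<open>\<phi> 1 = 1\<close>, the objective is at least the number of singular values of \<open>W\<close> equal
  to 1, and the equality \<open>\<parallel>X\<parallel>\<^sub>* = \<langle>W, X\<rangle>\<close> with \<open>\<parallel>W\<parallel> \<le> 1\<close> forces every right singular vector of
  \<open>X\<close> with positive singular value into the span of the right singular vectors of \<open>W\<close> with
  singular value 1, so there are at least \<open>rank X\<close> of them.  Conversely, for an SVD of \<open>X\<close> the
  matrix \<open>U\<^sub>1V\<^sub>1\<^sup>T + t\<^sup>* U\<^sub>2[Diag(e) 0]V\<^sub>2\<^sup>T\<close> shares the singular vectors of \<open>X\<close>, has singular values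
  1 (\<open>rank X\<close> times) and \<open>t\<^sup>*\<close>, and so is feasible with objective exactly \<open>rank X\<close>.\<close>

section \<open>Orthonormal columns\<close>

lemma sum_power2_eq_0_iff:
  fixes x :: "nat \<Rightarrow> real"
  shows "(\<Sum>a<n. (x a)^2) = 0 \<longleftrightarrow> (\<forall>a<n. x a = 0)"
  by (subst sum_nonneg_eq_0_iff) auto

lemma sum_power2_normalize:
  fixes y :: "nat \<Rightarrow> real"
  assumes "(\<Sum>a<n. (y a)^2) \<noteq> 0"
  shows "(\<Sum>a<n. (y a / sqrt (\<Sum>a<n. (y a)^2))^2) = 1"
proof -
  have "(\<Sum>a<n. (y a)^2) > 0" using assms by (simp add: order_le_neq_trans sum_nonneg)
  thus ?thesis by (simp add: power_divide sum_divide_distrib[symmetric])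
qed

lemma sum_split_at:
  fixes g :: "nat \<Rightarrow> 'a::comm_monoid_add"
  assumes "k \<le> n"
  shows "(\<Sum>c<n. g c) = (\<Sum>c<k. g c) + (\<Sum>p<n-k. g (k+p))"
proof -
  have "{..<n} = {..<k} \<union> {k..<n}" using assms by auto
  hence "(\<Sum>c<n. g c) = (\<Sum>c<k. g c) + (\<Sum>c\<in>{k..<n}. g c)"
    by (metis finite_lessThan ivl_disj_int_one(2) sum.union_disjoint finite_atLeastLessThan)
  also have "(\<Sum>c\<in>{k..<n}. g c) = (\<Sum>p<n-k. g (k+p))"
    using sum.shift_bounds_nat_ivl[of g 0 k "n - k"] assms by (simp add: atLeast0LessThan add.commute)
  finally show ?thesis .
qed

lemma exists_unit_orthogonal_to_cols:
  fixes A :: "real mat"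
  assumes A: "A \<in> carrier_mat n k" and kn: "k < n"
  shows "\<exists>x. (\<forall>j<k. (\<Sum>a<n. A$$(a,j) * x a) = 0) \<and> (\<Sum>a<n. (x a)^2) = 1"
proof -
  define B where "B = mat n n (\<lambda>(i,a). if i < k then A$$(a,i) else (0::real))"
  have B: "B \<in> carrier_mat n n" unfolding B_def by auto
  have "transpose_mat B *\<^sub>v unit_vec n k = 0\<^sub>v n"
    by (rule eq_vecI, auto simp: B_def scalar_prod_def unit_vec_def kn)
  moreover have "unit_vec n k \<noteq> (0\<^sub>v n :: real vec)"
    using kn by (metis index_unit_vec(1) index_zero_vec(1) order.refl zero_neq_one)
  ultimately have "det (transpose_mat B) = 0"
    using det_0_iff_vec_prod_zero_field[of "transpose_mat B" n] B unit_vec_carrier[of n k]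
    by (metis transpose_carrier_mat)
  hence "det B = 0" using B by (simp add: det_transpose)
  then obtain v where v: "v \<in> carrier_vec n" "v \<noteq> 0\<^sub>v n" "B *\<^sub>v v = 0\<^sub>v n"
    using det_0_iff_vec_prod_zero_field[OF B] by auto
  have N: "(\<Sum>a<n. (v$a)^2) \<noteq> 0"
  proof
    assume "(\<Sum>a<n. (v$a)^2) = 0"
    hence "\<forall>a<n. v$a = 0" by (simp add: sum_power2_eq_0_iff)
    hence "v = 0\<^sub>v n" using v(1) by (intro eq_vecI) auto
    thus False using v(2) by simp
  qed
  have "(\<Sum>a<n. A$$(a,j) * (v$a / sqrt (\<Sum>a<n. (v$a)^2))) = 0" if j: "j < k" for j
  proof -
    have "(B *\<^sub>v v) $ j = 0" using v(3) j kn by simp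
    hence "(\<Sum>a<n. A$$(a,j) * v$a) = 0" using j kn v(1)
      by (simp add: B_def scalar_prod_def atLeast0LessThan)
    moreover have "(\<Sum>a<n. A$$(a,j) * (v$a / sqrt (\<Sum>a<n. (v$a)^2)))
        = (\<Sum>a<n. A$$(a,j) * v$a) / sqrt (\<Sum>a<n. (v$a)^2)"
      by (simp add: sum_divide_distrib)
    ultimately show ?thesis by simp
  qed
  hence "\<forall>j<k. (\<Sum>a<n. A$$(a,j) * (v$a / sqrt (\<Sum>a<n. (v$a)^2))) = 0" by blast
  with sum_power2_normalize[OF N] show ?thesis
    by (intro exI[of _ "\<lambda>a. v$a / sqrt (\<Sum>a<n. (v$a)^2)"]) simp
qed

definition orthonormal_cols :: "nat \<Rightarrow> nat \<Rightarrow> real mat \<Rightarrow> bool" where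
  "orthonormal_cols n k A \<longleftrightarrow> A \<in> carrier_mat n k \<and>
     (\<forall>i<k. \<forall>j<k. (\<Sum>a<n. A$$(a,i)*A$$(a,j)) = (if i = j then 1 else 0))"

lemma orth_mat_carrier: "orth_mat n U \<Longrightarrow> U \<in> carrier_mat n n"
  unfolding orth_mat_def by simp

lemma orth_mat_iff_orthonormal_cols: "orth_mat n U \<longleftrightarrow> orthonormal_cols n n U"
proof
  assume "orth_mat n U"
  hence U: "U \<in> carrier_mat n n" and e: "transpose_mat U * U = 1\<^sub>m n" unfolding orth_mat_def by auto
  show "orthonormal_cols n n U" unfolding orthonormal_cols_def
  proof (intro conjI allI impI U)
    fix i j assume "i < n" "j < n"
    thus "(\<Sum>a<n. U$$(a,i)*U$$(a,j)) = (if i = j then 1 else 0)"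
      using arg_cong[OF e, of "\<lambda>M. M $$ (i,j)"] U by (simp add: scalar_prod_def atLeast0LessThan)
  qed
next
  assume o: "orthonormal_cols n n U"
  hence U: "U \<in> carrier_mat n n" unfolding orthonormal_cols_def by auto
  have "transpose_mat U * U = 1\<^sub>m n"
    by (rule eq_matI, insert o U, auto simp: orthonormal_cols_def scalar_prod_def atLeast0LessThan)
  thus "orth_mat n U" using U unfolding orth_mat_def by auto
qed

lemma orth_mat_cols:
  assumes "orth_mat n U" "i < n" "j < n"
  shows "(\<Sum>a<n. U$$(a,i)*U$$(a,j)) = (if i = j then 1 else 0)"
  using assms unfolding orth_mat_iff_orthonormal_cols orthonormal_cols_def by auto

lemma orth_mat_rows:
  assumes "orth_mat n U" "i < n" "j < n"
  shows "(\<Sum>a<n. U$$(i,a)*U$$(j,a)) = (if i = j then 1 else 0)"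
proof -
  have U: "U \<in> carrier_mat n n" and e: "transpose_mat U * U = 1\<^sub>m n" using assms unfolding orth_mat_def by auto
  have "U * transpose_mat U = 1\<^sub>m n"
    by (rule mat_mult_left_right_inverse[OF _ U e], insert U, auto)
  hence "(U * transpose_mat U) $$ (i,j) = 1\<^sub>m n $$ (i,j)" by simp
  thus ?thesis using U assms by (simp add: scalar_prod_def atLeast0LessThan)
qed

lemma orthonormal_cols_col_block:
  assumes U: "orth_mat n U" and "k \<le> n"
  shows "orthonormal_cols n k (col_block U 0 k)"
  using assms orth_mat_cols[OF U] orth_mat_carrier[OF U]
  unfolding orthonormal_cols_def col_block_def by auto

lemma orthonormal_cols_append_col:
  assumes A: "orthonormal_cols n k A"
    and orth: "\<forall>j<k. (\<Sum>a<n. A$$(a,j) * x a) = 0" and unit: "(\<Sum>a<n. (x a)^2) = 1"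
  shows "orthonormal_cols n (Suc k) (mat n (Suc k) (\<lambda>(a,j). if j < k then A$$(a,j) else x a))"
    (is "orthonormal_cols n (Suc k) ?A")
  unfolding orthonormal_cols_def
proof (intro conjI allI impI)
  show "?A \<in> carrier_mat n (Suc k)" by auto
  fix i j assume i: "i < Suc k" and j: "j < Suc k"
  have "(\<Sum>a<n. ?A$$(a,i)*?A$$(a,j)) =
        (\<Sum>a<n. (if i < k then A$$(a,i) else x a) * (if j < k then A$$(a,j) else x a))"
    using i j by (intro sum.cong) auto
  also have "\<dots> = (if i = j then 1 else 0)"
  proof (cases "i < k"; cases "j < k")
    assume "\<not> i < k" "\<not> j < k"
    hence "i = k" "j = k" using i j by auto
    thus ?thesis using unit by (simp add: power2_eq_square)
  qed (use A orth in \<open>auto simp: orthonormal_cols_def mult.commute\<close>)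
  finally show "(\<Sum>a<n. ?A$$(a,i)*?A$$(a,j)) = (if i = j then 1 else 0)" .
qed

lemma orthonormal_cols_extend:
  assumes "orthonormal_cols n k A" "k \<le> n"
  shows "\<exists>U. orth_mat n U \<and> (\<forall>a<n. \<forall>j<k. U$$(a,j) = A$$(a,j))"
  using assms
proof (induction "n - k" arbitrary: k A)
  case 0
  hence "k = n" by simp
  with "0.prems" show ?case unfolding orth_mat_iff_orthonormal_cols by blast
next
  case (Suc d)
  have A: "A \<in> carrier_mat n k" using Suc.prems unfolding orthonormal_cols_def by simp
  have kn: "k < n" using Suc.hyps(2) by simp
  obtain x where x: "\<forall>j<k. (\<Sum>a<n. A$$(a,j) * x a) = 0" "(\<Sum>a<n. (x a)^2) = 1"
    using exists_unit_orthogonal_to_cols[OF A kn] by blast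
  define A' where "A' = mat n (Suc k) (\<lambda>(a,j). if j < k then A$$(a,j) else x a)"
  have "d = n - Suc k" "Suc k \<le> n" using Suc.hyps(2) kn by auto
  then obtain U where "orth_mat n U" "\<forall>a<n. \<forall>j<Suc k. U$$(a,j) = A'$$(a,j)"
    using Suc.hyps(1) orthonormal_cols_append_col[OF Suc.prems(1) x] unfolding A'_def by blast
  thus ?case by (auto simp: A'_def)
qed

lemma orth_coord:
  assumes U: "orth_mat n U" and j: "j < n" and km: "k + m \<le> n"
  shows "(\<Sum>a<n. U$$(a,j) * (\<Sum>q<m. U$$(a, k+q) * y q)) = (if k \<le> j \<and> j < k+m then y (j-k) else 0)"
proof -
  have "(\<Sum>a<n. U$$(a,j) * (\<Sum>q<m. U$$(a, k+q) * y q)) = (\<Sum>q<m. y q * (\<Sum>a<n. U$$(a,j) * U$$(a, k+q)))"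
    by (simp add: sum_distrib_left mult_ac sum.swap[of _ "{..<m}"])
  also have "\<dots> = (\<Sum>q<m. if q = j - k \<and> k \<le> j then y q else 0)"
    using km j by (intro sum.cong refl) (auto simp: orth_mat_cols[OF U])
  also have "\<dots> = (if k \<le> j \<and> j < k+m then y (j-k) else 0)"
    by (cases "k \<le> j") (auto simp: sum.delta)
  finally show ?thesis .
qed

lemma orth_recon:
  assumes U: "orth_mat n U" and i: "i < n"
  shows "(\<Sum>c<n. U$$(i,c) * (\<Sum>a<n. U$$(a,c) * f a)) = f i"
proof -
  have "(\<Sum>c<n. U$$(i,c) * (\<Sum>a<n. U$$(a,c) * f a)) = (\<Sum>a<n. f a * (\<Sum>c<n. U$$(i,c) * U$$(a,c)))"
    by (simp add: sum_distrib_left mult_ac) (rule sum.swap)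
  also have "\<dots> = (\<Sum>a<n. if a = i then f a else 0)"
    by (intro sum.cong refl) (auto simp: orth_mat_rows[OF U i])
  finally show ?thesis using i by simp
qed


section \<open>Spectral theorem for real symmetric matrices\<close>

definition sym_mat :: "nat \<Rightarrow> real mat \<Rightarrow> bool" where
  "sym_mat n S \<longleftrightarrow> S \<in> carrier_mat n n \<and> (\<forall>i<n. \<forall>j<n. S$$(i,j) = S$$(j,i))"

lemma sym_mat_complex_eigenvalue_real:
  assumes S: "sym_mat n S" and ev: "eigenvector (map_mat complex_of_real S) v e"
  shows "e = complex_of_real (Re e)"
proof -
  let ?C = "map_mat complex_of_real S"
  have Sc: "S \<in> carrier_mat n n" and sy: "\<And>i j. i<n \<Longrightarrow> j<n \<Longrightarrow> S$$(i,j) = S$$(j,i)"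
    using S unfolding sym_mat_def by auto
  have v: "v \<in> carrier_vec n" "v \<noteq> 0\<^sub>v n" and Cv: "?C *\<^sub>v v = e \<cdot>\<^sub>v v"
    using ev Sc unfolding eigenvector_def by auto
  have eq: "(\<Sum>j<n. complex_of_real (S$$(i,j)) * v$j) = e * v$i" if i: "i < n" for i
  proof -
    have "(?C *\<^sub>v v) $ i = (e \<cdot>\<^sub>v v) $ i" using Cv by simp
    thus ?thesis using i v Sc by (simp add: scalar_prod_def atLeast0LessThan)
  qed
  \<comment> \<open>The Rayleigh quotient \<open>v\<^sup>* C v / v\<^sup>* v\<close> equals \<open>e\<close> and is self-conjugate.\<close>
  define Q where "Q = (\<Sum>i<n. cnj (v$i) * (\<Sum>j<n. complex_of_real (S$$(i,j)) * v$j))"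
  define N where "N = (\<Sum>i<n. cnj (v$i) * v$i)"
  have "Q = (\<Sum>i<n. cnj (v$i) * (e * v$i))" unfolding Q_def by (rule sum.cong[OF refl], simp add: eq)
  hence QN: "Q = e * N" unfolding N_def by (simp add: sum_distrib_left mult_ac)
  have "cnj Q = (\<Sum>i<n. v$i * (\<Sum>j<n. complex_of_real (S$$(i,j)) * cnj (v$j)))"
    unfolding Q_def by (simp add: sum_distrib_left)
  also have "\<dots> = (\<Sum>i<n. \<Sum>j<n. complex_of_real (S$$(i,j)) * v$i * cnj (v$j))"
    by (simp add: sum_distrib_left mult_ac)
  also have "\<dots> = (\<Sum>j<n. \<Sum>i<n. complex_of_real (S$$(i,j)) * v$i * cnj (v$j))"
    by (rule sum.swap)
  also have "\<dots> = (\<Sum>j<n. \<Sum>i<n. complex_of_real (S$$(j,i)) * v$i * cnj (v$j))"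
    by (intro sum.cong refl, simp add: sy)
  also have "\<dots> = Q" unfolding Q_def by (simp add: sum_distrib_left mult_ac)
  finally have Qr: "cnj Q = Q" .
  have Nr: "N = complex_of_real (\<Sum>i<n. (cmod (v$i))^2)"
    unfolding N_def of_real_sum by (rule sum.cong[OF refl]) (subst complex_norm_square, rule mult.commute)
  have "(\<Sum>i<n. (cmod (v$i))^2) \<noteq> 0"
  proof
    assume "(\<Sum>i<n. (cmod (v$i))^2) = 0"
    hence "\<forall>i<n. cmod (v$i) = 0" by (simp add: sum_power2_eq_0_iff)
    hence "v = 0\<^sub>v n" using v(1) by (intro eq_vecI) auto
    thus False using v(2) by simp
  qed
  hence "N \<noteq> 0" unfolding Nr of_real_eq_0_iff .
  moreover have "cnj N = N" using Nr by simp
  hence "cnj e * N = e * N" using Qr unfolding QN complex_cnj_mult by simp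
  ultimately have "cnj e = e" by simp
  hence "Im (cnj e) = Im e" by simp
  hence "Im e = 0" by simp
  thus ?thesis by (simp add: complex_eq_iff)
qed

lemma sym_mat_eigvec_exists:
  assumes S: "sym_mat n S" and n: "n > 0"
  shows "\<exists>lam x. (\<forall>i<n. (\<Sum>j<n. S$$(i,j) * x j) = lam * x i) \<and> (\<Sum>a<n. (x a)^2) = 1"
proof -
  have Sc: "S \<in> carrier_mat n n" using S unfolding sym_mat_def by auto
  have C: "map_mat complex_of_real S \<in> carrier_mat n n" using Sc by auto
  obtain e where "e \<in> spectrum (map_mat complex_of_real S)" using spectrum_non_empty[OF C n] by blast
  then obtain v where ev: "eigenvector (map_mat complex_of_real S) v e"
    unfolding spectrum_def eigenvalue_def by auto
  have v: "v \<in> carrier_vec n" "v \<noteq> 0\<^sub>v n" and Cv: "map_mat complex_of_real S *\<^sub>v v = e \<cdot>\<^sub>v v"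
    using ev C unfolding eigenvector_def by auto
  define a where "a = Re e"
  have eq: "(\<Sum>j<n. complex_of_real (S$$(i,j)) * v$j) = complex_of_real a * v$i" if i: "i < n" for i
  proof -
    have "(map_mat complex_of_real S *\<^sub>v v) $ i = (e \<cdot>\<^sub>v v) $ i" using Cv by simp
    thus ?thesis using i v Sc sym_mat_complex_eigenvalue_real[OF S ev]
      by (simp add: scalar_prod_def atLeast0LessThan a_def)
  qed
  \<comment> \<open>Since \<open>S\<close> and the eigenvalue are real, the real and imaginary parts of \<open>v\<close> are eigenvectors too.\<close>
  have re: "(\<Sum>j<n. S$$(i,j) * Re (v$j)) = a * Re (v$i)"
    and im: "(\<Sum>j<n. S$$(i,j) * Im (v$j)) = a * Im (v$i)" if "i < n" for i
    using arg_cong[OF eq[OF that], of Re] arg_cong[OF eq[OF that], of Im] by (simp_all add: Re_sum Im_sum)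
  obtain y where y: "\<forall>i<n. (\<Sum>j<n. S$$(i,j) * y j) = a * y i" "(\<Sum>i<n. (y i)^2) \<noteq> 0"
  proof (cases "(\<Sum>i<n. (Re (v$i))^2) = 0")
    case False thus ?thesis using re by (intro that[of "\<lambda>j. Re (v$j)"]) auto
  next
    case True
    have "(\<Sum>i<n. (Im (v$i))^2) \<noteq> 0"
    proof
      assume "(\<Sum>i<n. (Im (v$i))^2) = 0"
      with True have "\<forall>i<n. Re (v$i) = 0 \<and> Im (v$i) = 0" by (simp add: sum_power2_eq_0_iff)
      hence "v = 0\<^sub>v n" using v(1) by (intro eq_vecI) (auto simp: complex_eq_iff)
      thus False using v(2) by simp
    qed
    thus ?thesis using im by (intro that[of "\<lambda>j. Im (v$j)"]) auto
  qed
  define c where "c = sqrt (\<Sum>i<n. (y i)^2)"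
  have "(\<Sum>j<n. S$$(i,j) * (y j / c)) = a * (y i / c)" if "i < n" for i
  proof -
    have "(\<Sum>j<n. S$$(i,j) * (y j / c)) = (\<Sum>j<n. S$$(i,j) * y j) / c"
      by (simp add: sum_divide_distrib)
    thus ?thesis using y(1) that by simp
  qed
  with sum_power2_normalize[OF y(2)] show ?thesis unfolding c_def[symmetric]
    by (intro exI[of _ a] exI[of _ "\<lambda>i. y i / c"]) simp
qed


text \<open>The columns \<open>k, \<dots>, n-1\<close> of \<open>U\<close> span an \<open>S\<close>-invariant subspace, so an eigenvector \<open>y\<close>
  of the compression \<open>C = U\<^sub>2\<^sup>T S U\<^sub>2\<close> of \<open>S\<close> to that subspace lifts to the eigenvector \<open>U\<^sub>2 y\<close> of \<open>S\<close>.\<close>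

lemma sym_mat_lift_compressed_eigvec:
  assumes S: "sym_mat n S" and U: "orth_mat n U" and km: "k + m = n"
    and eig: "\<forall>j<k. \<forall>i<n. (\<Sum>b<n. S$$(i,b) * U$$(b,j)) = d j * U$$(i,j)"
    and ey: "\<forall>p<m. (\<Sum>q<m. (\<Sum>a<n. \<Sum>b<n. U$$(a,k+p) * S$$(a,b) * U$$(b,k+q)) * y q) = lam * y p"
  defines "w \<equiv> \<lambda>a. \<Sum>q<m. U$$(a,k+q) * y q"
  shows "i < n \<Longrightarrow> (\<Sum>b<n. S$$(i,b) * w b) = lam * w i"
proof -
  have sy: "\<And>i j. i<n \<Longrightarrow> j<n \<Longrightarrow> S$$(i,j) = S$$(j,i)" using S unfolding sym_mat_def by auto
  have cw: "\<And>c. c<n \<Longrightarrow> (\<Sum>a<n. U$$(a,c) * w a) = (if k \<le> c \<and> c < k+m then y (c-k) else 0)"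
    unfolding w_def by (rule orth_coord[OF U _ ], insert km, auto)
  have cSw: "(\<Sum>a<n. U$$(a,c) * (\<Sum>b<n. S$$(a,b) * w b)) = (if k \<le> c \<and> c < k+m then lam * y (c-k) else 0)"
    if c: "c < n" for c
  proof (cases "c < k")
    case True
    have "(\<Sum>a<n. U$$(a,c) * (\<Sum>b<n. S$$(a,b) * w b)) = (\<Sum>b<n. \<Sum>a<n. U$$(a,c) * S$$(a,b) * w b)"
      by (simp add: sum_distrib_left mult_ac) (rule sum.swap)
    also have "\<dots> = (\<Sum>b<n. w b * (\<Sum>a<n. S$$(b,a) * U$$(a,c)))"
      by (intro sum.cong refl, simp add: sum_distrib_left sy mult_ac)
    also have "\<dots> = (\<Sum>b<n. w b * (d c * U$$(b,c)))"
      by (intro sum.cong refl, insert eig True, auto)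
    also have "\<dots> = d c * (\<Sum>b<n. U$$(b,c) * w b)" by (simp add: sum_distrib_left mult_ac)
    finally show ?thesis using cw[OF c] True by simp
  next
    case False
    define p where "p = c - k"
    have p: "p < m" "c = k + p" using False c km unfolding p_def by auto
    have "(\<Sum>a<n. U$$(a,c) * (\<Sum>b<n. S$$(a,b) * w b)) = (\<Sum>a<n. \<Sum>b<n. \<Sum>q<m. U$$(a,k+p) * S$$(a,b) * U$$(b,k+q) * y q)"
      unfolding w_def p(2) by (simp add: sum_distrib_left mult_ac)
    also have "\<dots> = (\<Sum>a<n. \<Sum>q<m. \<Sum>b<n. U$$(a,k+p) * S$$(a,b) * U$$(b,k+q) * y q)"
      by (rule sum.cong[OF refl], rule sum.swap)
    also have "\<dots> = (\<Sum>q<m. \<Sum>a<n. \<Sum>b<n. U$$(a,k+p) * S$$(a,b) * U$$(b,k+q) * y q)"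
      by (rule sum.swap)
    also have "\<dots> = (\<Sum>q<m. (\<Sum>a<n. \<Sum>b<n. U$$(a,k+p) * S$$(a,b) * U$$(b,k+q)) * y q)"
      by (simp add: sum_distrib_right)
    also have "\<dots> = lam * y p" using ey p by simp
    finally show ?thesis using p False unfolding p_def by simp
  qed
  assume i: "i < n"
  have "(\<Sum>b<n. S$$(i,b) * w b) = (\<Sum>c<n. U$$(i,c) * (\<Sum>a<n. U$$(a,c) * (\<Sum>b<n. S$$(a,b) * w b)))"
    using orth_recon[OF U i, of "\<lambda>a. \<Sum>b<n. S$$(a,b) * w b"] by simp
  also have "\<dots> = (\<Sum>c<n. U$$(i,c) * (lam * (\<Sum>a<n. U$$(a,c) * w a)))"
    by (intro sum.cong refl, simp add: cSw cw)
  also have "\<dots> = lam * (\<Sum>c<n. U$$(i,c) * (\<Sum>a<n. U$$(a,c) * w a))"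
    by (simp add: sum_distrib_left mult_ac)
  also have "\<dots> = lam * w i" using orth_recon[OF U i, of w] by simp
  finally show ?thesis .
qed

lemma sym_mat_eigvec_orthogonal_to_eigvecs:
  assumes S: "sym_mat n S" and U: "orth_mat n U" and kn: "k < n"
    and eig: "\<forall>j<k. \<forall>i<n. (\<Sum>b<n. S$$(i,b) * U$$(b,j)) = d j * U$$(i,j)"
  shows "\<exists>lam w. (\<forall>i<n. (\<Sum>b<n. S$$(i,b) * w b) = lam * w i) \<and>
           (\<forall>j<k. (\<Sum>a<n. U$$(a,j) * w a) = 0) \<and> (\<Sum>a<n. (w a)^2) = 1"
proof -
  have sy: "\<And>i j. i<n \<Longrightarrow> j<n \<Longrightarrow> S$$(i,j) = S$$(j,i)" using S unfolding sym_mat_def by auto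
  define m where "m = n - k"
  have km: "k + m = n" and m0: "m > 0" using kn unfolding m_def by auto
  define C where "C = mat m m (\<lambda>(p,q). \<Sum>a<n. \<Sum>b<n. U$$(a,k+p) * S$$(a,b) * U$$(b,k+q))"
  have symC: "sym_mat m C" unfolding sym_mat_def
  proof (intro conjI allI impI)
    show "C \<in> carrier_mat m m" unfolding C_def by auto
    fix p q assume p: "p < m" and q: "q < m"
    have "C$$(p,q) = (\<Sum>a<n. \<Sum>b<n. U$$(a,k+p) * S$$(a,b) * U$$(b,k+q))"
      using p q unfolding C_def by simp
    also have "\<dots> = (\<Sum>b<n. \<Sum>a<n. U$$(a,k+p) * S$$(a,b) * U$$(b,k+q))" by (rule sum.swap)
    also have "\<dots> = (\<Sum>b<n. \<Sum>a<n. U$$(b,k+q) * S$$(b,a) * U$$(a,k+p))"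
      by (intro sum.cong refl, simp add: sy mult_ac)
    also have "\<dots> = C$$(q,p)" using p q unfolding C_def by simp
    finally show "C$$(p,q) = C$$(q,p)" .
  qed
  obtain lam y where ey: "\<forall>p<m. (\<Sum>q<m. C$$(p,q) * y q) = lam * y p" and y1: "(\<Sum>q<m. (y q)^2) = 1"
    using sym_mat_eigvec_exists[OF symC m0] by blast
  define w where "w = (\<lambda>a. \<Sum>q<m. U$$(a,k+q) * y q)"
  have cw: "\<And>c. c<n \<Longrightarrow> (\<Sum>a<n. U$$(a,c) * w a) = (if k \<le> c \<and> c < k+m then y (c-k) else 0)"
    unfolding w_def by (rule orth_coord[OF U _ ], insert km, auto)
  have "\<forall>i<n. (\<Sum>b<n. S$$(i,b) * w b) = lam * w i"
    using sym_mat_lift_compressed_eigvec[OF S U km eig, of y lam] ey unfolding w_def C_def by simp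
  moreover have "(\<Sum>a<n. (w a)^2) = 1"
  proof -
    have "(\<Sum>a<n. (w a)^2) = (\<Sum>a<n. \<Sum>q<m. y q * (U$$(a,k+q) * w a))"
      unfolding power2_eq_square by (subst (2) w_def) (simp add: sum_distrib_left mult_ac)
    also have "\<dots> = (\<Sum>q<m. \<Sum>a<n. y q * (U$$(a,k+q) * w a))" by (rule sum.swap)
    also have "\<dots> = (\<Sum>q<m. y q * (\<Sum>a<n. U$$(a,k+q) * w a))" by (simp add: sum_distrib_left)
    also have "\<dots> = (\<Sum>q<m. y q * y q)"
      by (intro sum.cong refl, subst cw, insert km, auto)
    finally show ?thesis using y1 by (simp add: power2_eq_square)
  qed
  moreover have "\<forall>j<k. (\<Sum>a<n. U$$(a,j) * w a) = 0" using cw kn by simp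
  ultimately show ?thesis by blast
qed

lemma sym_mat_spectral:
  assumes S: "sym_mat n S"
  shows "\<exists>U d. orth_mat n U \<and> (\<forall>j<n. \<forall>i<n. (\<Sum>b<n. S$$(i,b) * U$$(b,j)) = d j * U$$(i,j))"
proof -
  have "\<exists>U d. orth_mat n U \<and> (\<forall>j<k. \<forall>i<n. (\<Sum>b<n. S$$(i,b) * U$$(b,j)) = d j * U$$(i,j))"
    if "k \<le> n" for k
    using that
  proof (induction k)
    case 0
    have "orth_mat n (1\<^sub>m n)" unfolding orth_mat_def by auto
    thus ?case by blast
  next
    case (Suc k)
    hence kn: "k < n" by auto
    from Suc obtain U d where U: "orth_mat n U" and
      eig: "\<forall>j<k. \<forall>i<n. (\<Sum>b<n. S$$(i,b) * U$$(b,j)) = d j * U$$(i,j)" by auto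
    obtain lam w where w: "\<forall>i<n. (\<Sum>b<n. S$$(i,b) * w b) = lam * w i"
        "\<forall>j<k. (\<Sum>a<n. U$$(a,j) * w a) = 0" "(\<Sum>a<n. (w a)^2) = 1"
      using sym_mat_eigvec_orthogonal_to_eigvecs[OF S U kn eig] by blast
    define A where "A = mat n (Suc k) (\<lambda>(a,j). if j < k then col_block U 0 k $$ (a,j) else w a)"
    have "\<forall>j<k. (\<Sum>a<n. col_block U 0 k $$ (a,j) * w a) = 0"
      using w(2) orth_mat_carrier[OF U] by (simp add: col_block_def)
    hence "orthonormal_cols n (Suc k) A"
      unfolding A_def using orthonormal_cols_append_col orthonormal_cols_col_block U kn w(3) by simp
    then obtain U' where U': "orth_mat n U'" and U'A: "\<forall>a<n. \<forall>j<Suc k. U'$$(a,j) = A$$(a,j)"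
      using orthonormal_cols_extend kn by (metis Suc_leI)
    have AU: "\<forall>a<n. \<forall>j<k. A$$(a,j) = U$$(a,j)" and Aw: "\<forall>a<n. A$$(a,k) = w a"
      using orth_mat_carrier[OF U] by (auto simp: A_def col_block_def)
    have "\<forall>j<Suc k. \<forall>i<n. (\<Sum>b<n. S$$(i,b) * U'$$(b,j)) = (d(k:=lam)) j * U'$$(i,j)"
    proof (intro allI impI)
      fix j i assume j: "j < Suc k" and i: "i < n"
      show "(\<Sum>b<n. S$$(i,b) * U'$$(b,j)) = (d(k:=lam)) j * U'$$(i,j)"
      proof (cases "j < k")
        case True
        have "(\<Sum>b<n. S$$(i,b) * U'$$(b,j)) = (\<Sum>b<n. S$$(i,b) * U$$(b,j))"
          using U'A AU True by (intro sum.cong) auto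
        thus ?thesis using eig U'A AU True i by auto
      next
        case False
        hence jk: "j = k" using j by auto
        have "(\<Sum>b<n. S$$(i,b) * U'$$(b,j)) = (\<Sum>b<n. S$$(i,b) * w b)"
          using U'A Aw jk by (intro sum.cong) auto
        thus ?thesis using w(1) U'A Aw jk i by auto
      qed
    qed
    with U' show ?case by blast
  qed
  thus ?thesis by blast
qed

lemma sort_perm:
  fixes d :: "nat \<Rightarrow> real"
  shows "\<exists>p. p permutes {..<n} \<and> (\<forall>i j. i \<le> j \<longrightarrow> j < n \<longrightarrow> d (p j) \<le> d (p i))"
proof -
  define ys where "ys = map d [0..<n]"
  define xs where "xs = rev (sort ys)"
  have "mset xs = mset ys" unfolding xs_def by simp
  then obtain p where p: "p permutes {..<length ys}" "permute_list p ys = xs"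
    by (rule mset_eq_permutation)
  have ly: "length ys = n" unfolding ys_def by simp
  have sx: "sorted_wrt (\<ge>) xs" unfolding xs_def sorted_wrt_rev by simp
  have px: "d (p i) = xs ! i" if i: "i < n" for i
  proof -
    have "p i < n" using p(1) i ly by (metis lessThan_iff permutes_in_image)
    hence "d (p i) = ys ! p i" unfolding ys_def by simp
    also have "\<dots> = permute_list p ys ! i" using i ly p(1) by (simp add: permute_list_nth)
    finally show ?thesis using p(2) by simp
  qed
  have "d (p j) \<le> d (p i)" if ij: "i \<le> j" "j < n" for i j
  proof (cases "i = j")
    case False
    hence "xs ! j \<le> xs ! i" using sx ij ly by (simp add: sorted_wrt_iff_nth_less xs_def)
    thus ?thesis using px ij by simp
  qed simp
  with p(1) ly show ?thesis by blast
qed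

lemma sym_mat_spectral_sorted:
  assumes S: "sym_mat n S"
  shows "\<exists>U e. orth_mat n U \<and> (\<forall>j<n. \<forall>i<n. (\<Sum>b<n. S$$(i,b) * U$$(b,j)) = e j * U$$(i,j)) \<and>
           (\<forall>i j. i \<le> j \<longrightarrow> j < n \<longrightarrow> e j \<le> e i)"
proof -
  obtain U0 d where U0: "orth_mat n U0" and
    eig0: "\<forall>j<n. \<forall>i<n. (\<Sum>b<n. S$$(i,b) * U0$$(b,j)) = d j * U0$$(i,j)"
    using sym_mat_spectral[OF S] by blast
  obtain p where p: "p permutes {..<n}" and pmono: "\<forall>i j. i \<le> j \<longrightarrow> j < n \<longrightarrow> d (p j) \<le> d (p i)"
    using sort_perm[of n d] by blast
  have pin: "\<And>i. i < n \<Longrightarrow> p i < n" using p by (metis lessThan_iff permutes_in_image)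
  have pinj: "\<And>i j. i < n \<Longrightarrow> j < n \<Longrightarrow> p i = p j \<longleftrightarrow> i = j"
    using p by (metis permutes_inj inj_eq)
  define U where "U = mat n n (\<lambda>(a,j). U0$$(a, p j))"
  have "orth_mat n U" unfolding orth_mat_iff_orthonormal_cols orthonormal_cols_def
  proof (intro conjI allI impI)
    show "U \<in> carrier_mat n n" unfolding U_def by auto
    fix i j assume i: "i < n" and j: "j < n"
    have "(\<Sum>a<n. U$$(a,i)*U$$(a,j)) = (\<Sum>a<n. U0$$(a,p i)*U0$$(a,p j))"
      using i j by (intro sum.cong) (auto simp: U_def)
    thus "(\<Sum>a<n. U$$(a,i)*U$$(a,j)) = (if i = j then 1 else 0)"
      using orth_mat_cols[OF U0 pin[OF i] pin[OF j]] pinj[OF i j] by simp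
  qed
  moreover have "(\<Sum>b<n. S$$(i,b) * U$$(b,j)) = d (p j) * U$$(i,j)" if "j < n" "i < n" for i j
  proof -
    have "(\<Sum>b<n. S$$(i,b) * U$$(b,j)) = (\<Sum>b<n. S$$(i,b) * U0$$(b,p j))"
      using that by (intro sum.cong) (auto simp: U_def)
    thus ?thesis using eig0 pin that by (simp add: U_def)
  qed
  ultimately show ?thesis using pmono by (intro exI[of _ U] exI[of _ "\<lambda>j. d (p j)"]) auto
qed


section \<open>Existence and uniqueness of singular values\<close>

lemma downclosed_card:
  fixes S :: "nat set"
  assumes "S \<subseteq> {..<n}" "\<And>i j. j \<in> S \<Longrightarrow> i \<le> j \<Longrightarrow> i \<in> S"
  shows "S = {..<card S}"
proof (cases "S = {}")
  case False
  have fin: "finite S" using assms(1) finite_subset by blast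
  hence "Max S \<in> S" using False by simp
  hence S: "S = {..Max S}" using fin assms(2) by (auto intro: Max_ge)
  hence "card S = Suc (Max S)" by (metis card_atMost)
  thus ?thesis using S by (simp add: lessThan_Suc_atMost)
qed simp

lemma index_mult_rect_diag_transpose:
  assumes U: "U \<in> carrier_mat p m" and V: "V \<in> carrier_mat q n" and mn: "m \<le> n"
    and a: "a < p" and b: "b < q"
  shows "(U * rect_diag m n s * transpose_mat V) $$ (a,b) = (\<Sum>i<m. U$$(a,i) * s i * V$$(b,i))"
proof -
  have UR: "(U * rect_diag m n s) $$ (a,i) = (if i < m then U$$(a,i) * s i else 0)" if i: "i < n" for i
  proof -
    have "(U * rect_diag m n s) $$ (a,i) = (\<Sum>c<m. if c = i then U$$(a,c) * s c else 0)"
      using U a i by (simp add: rect_diag_def scalar_prod_def atLeast0LessThan if_distrib cong: if_cong)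
    thus ?thesis by simp
  qed
  have "(U * rect_diag m n s * transpose_mat V) $$ (a,b) = (\<Sum>i<n. (U * rect_diag m n s) $$ (a,i) * V$$(b,i))"
    using U V a b by (simp add: rect_diag_def scalar_prod_def atLeast0LessThan)
  also have "\<dots> = (\<Sum>i<n. (if i < m then U$$(a,i) * s i else 0) * V$$(b,i))"
    by (rule sum.cong, auto simp: UR)
  also have "\<dots> = (\<Sum>i<m. U$$(a,i) * s i * V$$(b,i))"
    using sum_split_at[OF mn, of "\<lambda>i. (if i < m then U$$(a,i) * s i else 0) * V$$(b,i)"] by simp
  finally show ?thesis .
qed

lemma svd_index:
  assumes "is_svd m n X U s V" "m \<le> n" "a < m" "b < n"
  shows "X$$(a,b) = (\<Sum>i<m. U$$(a,i) * s i * V$$(b,i))"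
proof -
  have U: "U \<in> carrier_mat m m" and V: "V \<in> carrier_mat n n"
    and X: "X = U * rect_diag m n s * transpose_mat V"
    using assms(1) orth_mat_carrier unfolding is_svd_def by auto
  show ?thesis unfolding X by (rule index_mult_rect_diag_transpose[OF U V assms(2-4)])
qed

text \<open>Rows that are pairwise orthogonal with nonincreasing squared norms \<open>e\<close> are the first rows
  of \<open>diag(\<surd>e) V\<^sup>T\<close> for an orthogonal \<open>V\<close>: normalize the nonzero rows and complete them.\<close>

lemma orthogonal_rows_factor:
  fixes z :: "nat \<Rightarrow> nat \<Rightarrow> real"
  assumes mn: "m \<le> n"
    and zz: "\<And>i j. i < m \<Longrightarrow> j < m \<Longrightarrow> (\<Sum>b<n. z i b * z j b) = (if i = j then e j else 0)"
    and mono: "\<And>i j. i \<le> j \<Longrightarrow> j < m \<Longrightarrow> e j \<le> e i"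
  shows "\<exists>V. orth_mat n V \<and> (\<forall>c<m. \<forall>b<n. z c b = sqrt (e c) * V$$(b,c))"
proof -
  have ez: "\<And>j. j < m \<Longrightarrow> e j = (\<Sum>b<n. (z j b)^2)" using zz by (simp add: power2_eq_square)
  have enn: "\<And>j. j < m \<Longrightarrow> e j \<ge> 0" using ez by (simp add: sum_nonneg)
  define P where "P = {j. j < m \<and> e j > 0}"
  define r where "r = card P"
  have Pr: "P = {..<r}" unfolding r_def
    by (rule downclosed_card[of _ m]) (auto simp: P_def intro: less_le_trans[OF _ mono])
  have rm: "r \<le> m" using Pr unfolding P_def by (metis lessThan_iff mem_Collect_eq not_le_imp_less order_less_irrefl)
  have epos: "\<And>j. j < m \<Longrightarrow> (e j > 0 \<longleftrightarrow> j < r)" using Pr unfolding P_def by blast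
  define A where "A = mat n r (\<lambda>(b,j). z j b / sqrt (e j))"
  have oA: "orthonormal_cols n r A" unfolding orthonormal_cols_def
  proof (intro conjI allI impI)
    show "A \<in> carrier_mat n r" unfolding A_def by auto
    fix i j assume i: "i < r" and j: "j < r"
    hence "e i > 0" "e j > 0" using epos rm by auto
    have "(\<Sum>b<n. A$$(b,i)*A$$(b,j)) = (\<Sum>b<n. z i b * z j b) / (sqrt (e i) * sqrt (e j))"
      by (simp add: A_def i j sum_divide_distrib)
    thus "(\<Sum>b<n. A$$(b,i)*A$$(b,j)) = (if i = j then 1 else 0)"
      using zz[of i j] i j rm \<open>e j > 0\<close> by auto
  qed
  obtain V where oV: "orth_mat n V" and VA: "\<forall>b<n. \<forall>j<r. V$$(b,j) = A$$(b,j)"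
    using orthonormal_cols_extend[OF oA] rm mn by auto
  have "z c b = sqrt (e c) * V$$(b,c)" if c: "c < m" and b: "b < n" for c b
  proof (cases "c < r")
    case True
    hence "e c > 0" using epos[OF c] by simp
    thus ?thesis using VA b True by (simp add: A_def)
  next
    case False
    hence "e c = 0" using epos[OF c] enn[OF c] by simp
    hence "z c b = 0" using ez[OF c] b by (simp add: sum_power2_eq_0_iff)
    thus ?thesis using \<open>e c = 0\<close> by simp
  qed
  with oV show ?thesis by blast
qed

lemma index_mult_transpose_self:
  assumes "X \<in> carrier_mat m n" "i < m" "j < m"
  shows "(X * transpose_mat X) $$ (i,j) = (\<Sum>b<n. X$$(i,b) * X$$(j,b))"
  using assms by (simp add: scalar_prod_def atLeast0LessThan)

lemma svd_exists:
  assumes X: "X \<in> carrier_mat m n" and mn: "m \<le> n"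
  shows "\<exists>U s V. is_svd m n X U s V"
proof -
  \<comment> \<open>Diagonalize \<open>X X\<^sup>T\<close>; the rows of \<open>U\<^sup>T X\<close> are then orthogonal.\<close>
  define S where "S = X * transpose_mat X"
  have S: "\<And>i j. i < m \<Longrightarrow> j < m \<Longrightarrow> S$$(i,j) = (\<Sum>b<n. X$$(i,b) * X$$(j,b))"
    unfolding S_def using index_mult_transpose_self[OF X] .
  have symS: "sym_mat m S" unfolding sym_mat_def using X S by (simp add: S_def mult.commute)
  obtain U e where oU: "orth_mat m U"
    and eig: "\<forall>j<m. \<forall>i<m. (\<Sum>b<m. S$$(i,b) * U$$(b,j)) = e j * U$$(i,j)"
    and emono: "\<forall>i j. i \<le> j \<longrightarrow> j < m \<longrightarrow> e j \<le> e i"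
    using sym_mat_spectral_sorted[OF symS] by auto
  define z where "z = (\<lambda>j b. \<Sum>a<m. U$$(a,j) * X$$(a,b))"
  have zz: "(\<Sum>b<n. z i b * z j b) = (if i = j then e j else 0)" if i: "i < m" and j: "j < m" for i j
  proof -
    have "(\<Sum>b<n. z i b * z j b) = (\<Sum>b<n. \<Sum>a<m. \<Sum>c<m. (U$$(a,i) * X$$(a,b)) * (U$$(c,j) * X$$(c,b)))"
      unfolding z_def by (simp only: sum_product)
    also have "\<dots> = (\<Sum>a<m. \<Sum>b<n. \<Sum>c<m. (U$$(a,i) * X$$(a,b)) * (U$$(c,j) * X$$(c,b)))"
      by (rule sum.swap)
    also have "\<dots> = (\<Sum>a<m. \<Sum>c<m. \<Sum>b<n. (U$$(a,i) * X$$(a,b)) * (U$$(c,j) * X$$(c,b)))"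
      by (rule sum.cong[OF refl], rule sum.swap)
    also have "\<dots> = (\<Sum>a<m. U$$(a,i) * (\<Sum>c<m. S$$(a,c) * U$$(c,j)))"
      by (rule sum.cong[OF refl], simp add: S sum_distrib_left sum_distrib_right mult_ac)
    also have "\<dots> = (\<Sum>a<m. U$$(a,i) * (e j * U$$(a,j)))"
      by (rule sum.cong[OF refl], simp add: eig j)
    also have "\<dots> = e j * (\<Sum>a<m. U$$(a,i) * U$$(a,j))" by (simp add: sum_distrib_left mult_ac)
    also have "\<dots> = (if i = j then e j else 0)" using orth_mat_cols[OF oU i j] by simp
    finally show ?thesis .
  qed
  obtain V where oV: "orth_mat n V" and zV: "\<forall>c<m. \<forall>b<n. z c b = sqrt (e c) * V$$(b,c)"
    using orthogonal_rows_factor[OF mn zz] emono by blast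
  have enn: "\<And>j. j < m \<Longrightarrow> e j \<ge> 0" using zz by (metis power2_eq_square sum_nonneg zero_le_power2)
  define s where "s = (\<lambda>j. if j < m then sqrt (e j) else 0)"
  have Uc: "U \<in> carrier_mat m m" and Vc: "V \<in> carrier_mat n n"
    using oU oV by (simp_all add: orth_mat_carrier)
  have "X = U * rect_diag m n s * transpose_mat V"
  proof (rule eq_matI)
    fix a b assume "a < dim_row (U * rect_diag m n s * transpose_mat V)"
      and "b < dim_col (U * rect_diag m n s * transpose_mat V)"
    hence a: "a < m" and b: "b < n" using Uc Vc by (auto simp: rect_diag_def)
    have "X$$(a,b) = (\<Sum>c<m. U$$(a,c) * z c b)"
      using orth_recon[OF oU a, of "\<lambda>a'. X$$(a',b)"] unfolding z_def by simp
    also have "\<dots> = (\<Sum>c<m. U$$(a,c) * s c * V$$(b,c))"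
      by (rule sum.cong[OF refl], simp add: zV b s_def)
    finally show "X$$(a,b) = (U * rect_diag m n s * transpose_mat V) $$ (a,b)"
      using index_mult_rect_diag_transpose[OF Uc Vc mn a b] by simp
  qed (use X Uc Vc in \<open>auto simp: rect_diag_def\<close>)
  moreover have "\<forall>i j. i \<le> j \<longrightarrow> j < m \<longrightarrow> s j \<le> s i" using emono by (simp add: s_def)
  ultimately have "is_svd m n X U s V" using X oU oV enn unfolding is_svd_def by (simp add: s_def)
  thus ?thesis by blast
qed

lemma order_prod_list_linear:
  fixes xs :: "real list"
  shows "Polynomial.order x (\<Prod>a\<leftarrow>xs. [:- a, 1:]) = count (mset xs) x"
proof (induction xs)
  case Nil
  show ?case by (simp add: order_0I)
next
  case (Cons a xs)
  have nz: "(\<Prod>a\<leftarrow>xs. [:- a, 1:]) \<noteq> (0 :: real poly)"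
    by (subst prod_list_zero_iff) auto
  have "[:- a, 1:] \<noteq> (0::real poly)" by simp
  hence "[:- a, 1:] * (\<Prod>a\<leftarrow>xs. [:- a, 1:]) \<noteq> (0 :: real poly)" using nz by (rule no_zero_divisors)
  hence "Polynomial.order x ([:- a, 1:] * (\<Prod>a\<leftarrow>xs. [:- a, 1:])) =
      Polynomial.order x [:- a, 1:] + Polynomial.order x (\<Prod>a\<leftarrow>xs. [:- a, 1:])"
    by (rule order_mult)
  thus ?case using Cons by (simp add: order_linear')
qed

lemma prod_list_linear_eq_imp_mset_eq:
  fixes xs ys :: "real list"
  assumes "(\<Prod>a\<leftarrow>xs. [:- a, 1:]) = (\<Prod>a\<leftarrow>ys. [:- a, 1:])"
  shows "mset xs = mset ys"
proof (rule multiset_eqI)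
  fix x
  show "count (mset xs) x = count (mset ys) x"
    using order_prod_list_linear[of x xs] order_prod_list_linear[of x ys] assms by simp
qed

lemma sorted_desc_unique:
  fixes s t :: "nat \<Rightarrow> real"
  assumes ms: "mset (map s [0..<m]) = mset (map t [0..<m])"
    and s: "\<And>i j. i \<le> j \<Longrightarrow> j < m \<Longrightarrow> s j \<le> s i"
    and t: "\<And>i j. i \<le> j \<Longrightarrow> j < m \<Longrightarrow> t j \<le> t i"
  shows "i < m \<Longrightarrow> s i = t i"
proof -
  have ss: "sorted (rev (map s [0..<m]))"
    apply (subst sorted_wrt_rev) apply (subst sorted_wrt_iff_nth_less) using s by auto
  have st: "sorted (rev (map t [0..<m]))"
    apply (subst sorted_wrt_rev) apply (subst sorted_wrt_iff_nth_less) using t by auto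
  have m2: "mset (rev (map s [0..<m])) = mset (rev (map t [0..<m]))" using ms by simp
  have "sort (rev (map t [0..<m])) = rev (map s [0..<m])"
    by (rule properties_for_sort[OF m2 ss])
  moreover have "sort (rev (map t [0..<m])) = rev (map t [0..<m])"
    using st by (simp add: sorted_sort_id)
  ultimately have "map s [0..<m] = map t [0..<m]" by simp
  thus "i < m \<Longrightarrow> s i = t i" by (metis add_0 diff_zero nth_map_upt)
qed

lemma svd_mult_transpose:
  assumes sv: "is_svd m n X U s V" and mn: "m \<le> n"
  shows "X * transpose_mat X = U * rect_diag m m (\<lambda>k. (s k)^2) * transpose_mat U"
proof -
  have X: "X \<in> carrier_mat m n" and U: "U \<in> carrier_mat m m" and oV: "orth_mat n V"
    using sv orth_mat_carrier unfolding is_svd_def by auto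
  show ?thesis
  proof (rule eq_matI)
    fix i j assume "i < dim_row (U * rect_diag m m (\<lambda>k. (s k)^2) * transpose_mat U)"
      and "j < dim_col (U * rect_diag m m (\<lambda>k. (s k)^2) * transpose_mat U)"
    hence i: "i < m" and j: "j < m" using U by auto
    have "(X * transpose_mat X) $$ (i,j) =
        (\<Sum>k<m. \<Sum>l<m. (U$$(i,k) * s k * U$$(j,l) * s l) * (\<Sum>b<n. V$$(b,k) * V$$(b,l)))"
    proof -
      have "(X * transpose_mat X) $$ (i,j)
          = (\<Sum>b<n. \<Sum>k<m. \<Sum>l<m. (U$$(i,k) * s k * V$$(b,k)) * (U$$(j,l) * s l * V$$(b,l)))"
        unfolding index_mult_transpose_self[OF X i j]
        by (rule sum.cong[OF refl], simp add: svd_index[OF sv mn] i j sum_product)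
      also have "\<dots> = (\<Sum>k<m. \<Sum>b<n. \<Sum>l<m. (U$$(i,k) * s k * V$$(b,k)) * (U$$(j,l) * s l * V$$(b,l)))"
        by (rule sum.swap)
      also have "\<dots> = (\<Sum>k<m. \<Sum>l<m. \<Sum>b<n. (U$$(i,k) * s k * V$$(b,k)) * (U$$(j,l) * s l * V$$(b,l)))"
        by (rule sum.cong[OF refl], rule sum.swap)
      finally show ?thesis by (simp add: sum_distrib_left mult_ac)
    qed
    also have "\<dots> = (\<Sum>k<m. \<Sum>l<m. if l = k then U$$(i,k) * s k * U$$(j,l) * s l else 0)"
      by (intro sum.cong refl) (use mn in \<open>auto simp: orth_mat_cols[OF oV]\<close>)
    also have "\<dots> = (\<Sum>k<m. U$$(i,k) * (s k)^2 * U$$(j,k))"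
      by (simp add: power2_eq_square mult_ac)
    finally show "(X * transpose_mat X) $$ (i,j) = (U * rect_diag m m (\<lambda>k. (s k)^2) * transpose_mat U) $$ (i,j)"
      using index_mult_rect_diag_transpose[OF U U le_refl i j] by simp
  qed (use X U in auto)
qed

lemma char_poly_mult_transpose_svd:
  assumes sv: "is_svd m n X U s V" and mn: "m \<le> n"
  shows "char_poly (X * transpose_mat X) = (\<Prod>a\<leftarrow>map (\<lambda>k. (s k)^2) [0..<m]. [:- a, 1:])"
proof -
  have X: "X \<in> carrier_mat m n" and oU: "orth_mat m U" using sv unfolding is_svd_def by auto
  have U: "U \<in> carrier_mat m m" using oU by (rule orth_mat_carrier)
  define D where "D = rect_diag m m (\<lambda>k. (s k)^2)"
  have D: "D \<in> carrier_mat m m" unfolding D_def rect_diag_def by simp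
  have "U * transpose_mat U = 1\<^sub>m m"
    using oU U unfolding orth_mat_def by (metis mat_mult_left_right_inverse transpose_carrier_mat)
  hence "similar_mat_wit (X * transpose_mat X) D U (transpose_mat U)"
    unfolding similar_mat_wit_def Let_def D_def svd_mult_transpose[OF sv mn]
    using X D U oU unfolding orth_mat_def D_def by auto
  hence "char_poly (X * transpose_mat X) = char_poly D"
    by (intro char_poly_similar) (auto simp: similar_mat_def)
  also have "\<dots> = (\<Prod>a\<leftarrow>diag_mat D. [:- a, 1:])"
    by (rule char_poly_upper_triangular[OF D]) (auto simp: upper_triangular_def D_def rect_diag_def)
  also have "diag_mat D = map (\<lambda>k. (s k)^2) [0..<m]"
    unfolding diag_mat_def D_def rect_diag_def by auto
  finally show ?thesis .
qed

text \<open>The squared singular values are the eigenvalues of \<open>X X\<^sup>T\<close>, hence determined by \<open>X\<close>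
  once sorted.\<close>

lemma svd_sing_vals_unique:
  assumes sv1: "is_svd m n X U s V" and sv2: "is_svd m n X U' s' V'" and mn: "m \<le> n"
  shows "s = s'"
proof
  fix i
  have "mset (map (\<lambda>k. (s k)^2) [0..<m]) = mset (map (\<lambda>k. (s' k)^2) [0..<m])"
    using char_poly_mult_transpose_svd[OF sv1 mn] char_poly_mult_transpose_svd[OF sv2 mn]
    by (intro prod_list_linear_eq_imp_mset_eq) simp
  moreover have "\<And>i j. i \<le> j \<Longrightarrow> j < m \<Longrightarrow> (s j)^2 \<le> (s i)^2"
    and "\<And>i j. i \<le> j \<Longrightarrow> j < m \<Longrightarrow> (s' j)^2 \<le> (s' i)^2"
    using sv1 sv2 unfolding is_svd_def by (auto intro!: power_mono)
  ultimately have sq: "i < m \<Longrightarrow> (s i)^2 = (s' i)^2" by (rule sorted_desc_unique)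
  show "s i = s' i"
  proof (cases "i < m")
    case True
    have "0 \<le> s i" "0 \<le> s' i" using sv1 sv2 True unfolding is_svd_def by auto
    thus ?thesis using sq[OF True] by (simp add: power2_eq_iff_nonneg)
  next
    case False thus ?thesis using sv1 sv2 unfolding is_svd_def by auto
  qed
qed

lemma sing_vals_svd_exists:
  assumes X: "X \<in> carrier_mat m n" and mn: "m \<le> n"
  shows "\<exists>U V. is_svd m n X U (sing_vals X) V"
proof -
  obtain U s V where sv: "is_svd m n X U s V" using svd_exists[OF X mn] by blast
  have dr: "dim_row X = m" "dim_col X = n" using X by auto
  have "(THE s. \<exists>U V. is_svd m n X U s V) = s"
  proof (rule the_equality)
    show "\<exists>U V. is_svd m n X U s V" using sv by blast
    fix t assume "\<exists>U V. is_svd m n X U t V"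
    then obtain U' V' where "is_svd m n X U' t V'" by blast
    thus "t = s" using svd_sing_vals_unique[OF _ sv mn] by blast
  qed
  hence "sing_vals X = s" unfolding sing_vals_def dr .
  thus ?thesis using sv by blast
qed

lemma sing_vals_eqI:
  assumes sv: "is_svd m n X U s V" and mn: "m \<le> n"
  shows "sing_vals X = s"
proof -
  have X: "X \<in> carrier_mat m n" using sv unfolding is_svd_def by auto
  obtain U' V' where "is_svd m n X U' (sing_vals X) V'" using sing_vals_svd_exists[OF X mn] by blast
  thus ?thesis using svd_sing_vals_unique[OF _ sv mn] by blast
qed

section \<open>Rank and singular values\<close>

lemma (in vec_space) rank_mult_le:
  assumes A: "A \<in> carrier_mat n k" and B: "B \<in> carrier_mat k l"
  shows "rank (A * B) \<le> rank A"
proof -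
  have AB: "A * B \<in> carrier_mat n l" using A B by auto
  define W where "W = span (set (cols A))"
  have incl: "span (set (cols (A * B))) \<subseteq> W"
  proof
    fix y assume "y \<in> span (set (cols (A * B)))"
    hence "y \<in> col_space (A * B)" unfolding col_space_def .
    then obtain x where x: "x \<in> carrier_vec (dim_col (A*B))" and y: "y \<in> carrier_vec (dim_row (A * B))"
      and yx: "(A * B) *\<^sub>v x = y"
      unfolding col_space_eq[OF AB] by auto
    have "y = A *\<^sub>v (B *\<^sub>v x)" using yx x A B by (auto simp: assoc_mult_mat_vec)
    moreover have "B *\<^sub>v x \<in> carrier_vec (dim_col A)" using A B by (intro carrier_vecI) simp
    moreover have "A *\<^sub>v (B *\<^sub>v x) \<in> carrier_vec (dim_row A)" using A by (intro carrier_vecI) simp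
    ultimately have "y \<in> col_space A" unfolding col_space_eq[OF A] by auto
    thus "y \<in> W" unfolding W_def col_space_def .
  qed
  have subW: "subspace class_ring W V" unfolding W_def
    by (metis A cols_dim carrier_matD(1) span_is_subspace)
  have subAB: "subspace class_ring (span (set (cols (A * B)))) V"
    by (metis AB cols_dim carrier_matD(1) span_is_subspace)
  have subspace: "subspace class_ring (span (set (cols (A * B)))) (vs W)"
    using nested_subspaces[OF subW subAB incl] .
  have finW: "vectorspace.fin_dim class_ring (vs W)" unfolding W_def using fin_dim_span_cols[OF A] .
  have finAB: "vectorspace.fin_dim class_ring (span_vs (set (cols (A * B))))" using fin_dim_span_cols[OF AB] by simp
  have "rank (A * B) \<le> vectorspace.dim class_ring (vs W)" unfolding rank_def
    using vectorspace.subspace_dim[OF subspace_is_vs[OF subW] subspace finW] finAB by auto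
  thus ?thesis unfolding rank_def W_def .
qed

lemma rank_orthonormal_cols:
  fixes Q :: "real mat"
  assumes o: "orthonormal_cols n r Q"
  shows "vec_space.rank n Q = r"
proof -
  interpret vec_space "TYPE(real)" n .
  have Q: "Q \<in> carrier_mat n r" and oq: "\<And>i j. i<r \<Longrightarrow> j<r \<Longrightarrow> (\<Sum>a<n. Q$$(a,i)*Q$$(a,j)) = (if i = j then 1 else 0)"
    using o unfolding orthonormal_cols_def by auto
  have dist: "distinct (cols Q)"
  proof (rule ccontr)
    assume "\<not> distinct (cols Q)"
    then obtain i j where ij: "i \<noteq> j" "cols Q ! i = cols Q ! j" "i < length (cols Q)" "j < length (cols Q)"
      using distinct_conv_nth by blast
    hence ir: "i < r" "j < r" using Q by auto
    have "col Q i = col Q j" using ij Q by auto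
    hence "\<And>a. a < n \<Longrightarrow> Q$$(a,i) = Q$$(a,j)" using ir Q by (metis carrier_matD(1) index_col ij(3) ij(4) cols_length)
    hence "(\<Sum>a<n. Q$$(a,i)*Q$$(a,j)) = (\<Sum>a<n. Q$$(a,i)*Q$$(a,i))" by (intro sum.cong) auto
    thus False using oq[OF ir(1) ir(2)] oq[OF ir(1) ir(1)] ij(1) by simp
  qed
  have "lin_indpt (set (cols Q))"
  proof
    assume "lin_dep (set (cols Q))"
    then obtain v where v: "v \<in> carrier_vec r" "v \<noteq> 0\<^sub>v r" "Q *\<^sub>v v = 0\<^sub>v n"
      using lin_depE[OF Q _ dist] by blast
    have "\<And>j. j < r \<Longrightarrow> v$j = 0"
    proof -
      fix j assume j: "j < r"
      have z: "\<And>a. a < n \<Longrightarrow> (\<Sum>i<r. Q$$(a,i) * v$i) = 0"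
      proof -
        fix a assume a: "a < n"
        have "(Q *\<^sub>v v) $ a = 0" using v(3) a by simp
        thus "(\<Sum>i<r. Q$$(a,i) * v$i) = 0" using a Q v(1) by (simp add: scalar_prod_def atLeast0LessThan)
      qed
      have "0 = (\<Sum>a<n. Q$$(a,j) * (\<Sum>i<r. Q$$(a,i) * v$i))" using z by simp
      also have "\<dots> = (\<Sum>a<n. \<Sum>i<r. v$i * (Q$$(a,j) * Q$$(a,i)))" by (simp add: sum_distrib_left mult_ac)
      also have "\<dots> = (\<Sum>i<r. \<Sum>a<n. v$i * (Q$$(a,j) * Q$$(a,i)))" by (rule sum.swap)
      also have "\<dots> = (\<Sum>i<r. v$i * (if j = i then 1 else 0))"
        by (rule sum.cong[OF refl], simp add: sum_distrib_left[symmetric] oq j)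
      also have "\<dots> = (\<Sum>i<r. if i = j then v$i else 0)" by (rule sum.cong, auto)
      also have "\<dots> = v$j" using j by (simp add: sum.delta)
      finally show "v$j = 0" by simp
    qed
    hence "v = 0\<^sub>v r" using v(1) by (intro eq_vecI) auto
    thus False using v(2) by simp
  qed
  thus ?thesis using lin_indpt_full_rank[OF Q dist] by blast
qed

lemma svd_pos_sing_vals_prefix:
  assumes sv: "is_svd m n X U s V"
  shows "{i. i < m \<and> s i > 0} = {..<card {i. i < m \<and> s i > 0}}"
    and "card {i. i < m \<and> s i > 0} \<le> m"
proof -
  have mono: "\<And>i j. i \<le> j \<Longrightarrow> j < m \<Longrightarrow> s j \<le> s i" using sv unfolding is_svd_def by auto
  show "{i. i < m \<and> s i > 0} = {..<card {i. i < m \<and> s i > 0}}"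
  proof (rule downclosed_card[of _ m])
    show "{i. i < m \<and> s i > 0} \<subseteq> {..<m}" by auto
    fix i j assume "j \<in> {i. i < m \<and> s i > 0}" "i \<le> j"
    thus "i \<in> {i. i < m \<and> s i > 0}" using mono[of i j] by auto
  qed
  have "{i. i < m \<and> s i > 0} \<subseteq> {..<m}" by auto
  thus "card {i. i < m \<and> s i > 0} \<le> m" using card_mono[of "{..<m}"] by fastforce
qed

lemma mrank_eq_of_factors:
  assumes A: "A \<in> carrier_mat m k" and C: "C \<in> carrier_mat k n" and B: "B \<in> carrier_mat n k"
    and XAC: "X = A * C" and AXB: "A = X * B"
  shows "mrank X = vec_space.rank m A"
proof -
  interpret vec_space "TYPE(real)" m .
  have X: "X \<in> carrier_mat m n" using XAC A C by simp
  have "rank X \<le> rank A" unfolding XAC by (rule rank_mult_le[OF A C])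
  moreover have "rank A \<le> rank X" by (subst AXB, rule rank_mult_le[OF X B])
  ultimately show ?thesis unfolding mrank_def using X by simp
qed

lemma svd_truncate:
  assumes sv: "is_svd m n X U s V" and mn: "m \<le> n" and rm: "r \<le> m"
    and pos: "\<And>i. i < m \<Longrightarrow> 0 < s i \<longleftrightarrow> i < r"
  shows "X = col_block U 0 r * mat r n (\<lambda>(i,b). s i * V$$(b,i))"
proof -
  have X: "X \<in> carrier_mat m n" and U: "U \<in> carrier_mat m m" and snn: "\<And>i. i < m \<Longrightarrow> s i \<ge> 0"
    using sv orth_mat_carrier unfolding is_svd_def by auto
  show ?thesis
  proof (rule eq_matI)
    fix a b assume "a < dim_row (col_block U 0 r * mat r n (\<lambda>(i,b). s i * V$$(b,i)))"
      and "b < dim_col (col_block U 0 r * mat r n (\<lambda>(i,b). s i * V$$(b,i)))"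
    hence a: "a < m" and b: "b < n" using U by (auto simp: col_block_def)
    have "X$$(a,b) = (\<Sum>k<r. U$$(a,k) * s k * V$$(b,k)) + (\<Sum>p<m-r. U$$(a,r+p) * s (r+p) * V$$(b,r+p))"
      unfolding svd_index[OF sv mn a b] by (rule sum_split_at[OF rm])
    also have "(\<Sum>p<m-r. U$$(a,r+p) * s (r+p) * V$$(b,r+p)) = 0"
    proof (intro sum.neutral ballI)
      fix p assume "p \<in> {..<m-r}"
      hence "r + p < m" by simp
      hence "s (r+p) = 0" using pos[of "r+p"] snn[of "r+p"] by simp
      thus "U$$(a,r+p) * s (r+p) * V$$(b,r+p) = 0" by simp
    qed
    finally show "X$$(a,b) = (col_block U 0 r * mat r n (\<lambda>(i,b). s i * V$$(b,i))) $$ (a,b)"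
      using a b U by (simp add: col_block_def scalar_prod_def atLeast0LessThan mult_ac)
  qed (use X U in \<open>auto simp: col_block_def\<close>)
qed

lemma svd_left_sing_vecs:
  assumes sv: "is_svd m n X U s V" and mn: "m \<le> n" and rm: "r \<le> m"
    and pos: "\<And>i. i < m \<Longrightarrow> 0 < s i \<longleftrightarrow> i < r"
  shows "col_block U 0 r = X * mat n r (\<lambda>(b,i). V$$(b,i) / s i)"
proof -
  have X: "X \<in> carrier_mat m n" and U: "U \<in> carrier_mat m m" and oV: "orth_mat n V"
    using sv orth_mat_carrier unfolding is_svd_def by auto
  show ?thesis
  proof (rule eq_matI)
    fix a i assume "a < dim_row (X * mat n r (\<lambda>(b,i). V$$(b,i) / s i))"
      and "i < dim_col (X * mat n r (\<lambda>(b,i). V$$(b,i) / s i))"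
    hence a: "a < m" and i: "i < r" using X by auto
    have si: "s i > 0" using pos[of i] i rm by simp
    have "(X * mat n r (\<lambda>(b,i). V$$(b,i) / s i)) $$ (a,i) = (\<Sum>b<n. X$$(a,b) * (V$$(b,i) / s i))"
      using a i X by (simp add: scalar_prod_def atLeast0LessThan)
    also have "\<dots> = (\<Sum>b<n. \<Sum>k<m. U$$(a,k) * s k / s i * (V$$(b,k) * V$$(b,i)))"
      by (rule sum.cong[OF refl], simp add: svd_index[OF sv mn a] sum_distrib_right sum_distrib_left
          sum_divide_distrib mult_ac)
    also have "\<dots> = (\<Sum>k<m. \<Sum>b<n. U$$(a,k) * s k / s i * (V$$(b,k) * V$$(b,i)))" by (rule sum.swap)
    also have "\<dots> = (\<Sum>k<m. if k = i then U$$(a,k) * s k / s i else 0)"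
      by (rule sum.cong[OF refl], subst sum_distrib_left[symmetric], subst orth_mat_cols[OF oV],
          insert i rm mn, auto)
    also have "\<dots> = U$$(a,i)" using si i rm by (simp add: sum.delta)
    finally show "col_block U 0 r $$ (a,i) = (X * mat n r (\<lambda>(b,i). V$$(b,i) / s i)) $$ (a,i)"
      using a i U by (simp add: col_block_def)
  qed (use X U in \<open>auto simp: col_block_def\<close>)
qed

lemma svd_rank:
  assumes sv: "is_svd m n X U s V" and mn: "m \<le> n"
  shows "mrank X = card {i. i < m \<and> s i > 0}"
proof -
  define r where "r = card {i. i < m \<and> s i > 0}"
  have pos: "\<And>i. i < m \<Longrightarrow> 0 < s i \<longleftrightarrow> i < r"
    using svd_pos_sing_vals_prefix(1)[OF sv] unfolding r_def[symmetric] by blast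
  have rm: "r \<le> m" using svd_pos_sing_vals_prefix(2)[OF sv] unfolding r_def .
  have oU: "orth_mat m U" using sv unfolding is_svd_def by auto
  have "mrank X = vec_space.rank m (col_block U 0 r)"
    using svd_left_sing_vecs[OF sv mn rm pos] orth_mat_carrier[OF oU] sv unfolding is_svd_def
    by (intro mrank_eq_of_factors[OF _ _ _ svd_truncate[OF sv mn rm pos]]) (auto simp: col_block_def)
  also have "\<dots> = r" by (rule rank_orthonormal_cols[OF orthonormal_cols_col_block[OF oU rm]])
  finally show ?thesis unfolding r_def .
qed

lemma svd_pos_iff_less_mrank:
  assumes sv: "is_svd m n X U s V" and mn: "m \<le> n"
  shows "i < m \<Longrightarrow> 0 < s i \<longleftrightarrow> i < mrank X" and "mrank X \<le> m"
  using svd_pos_sing_vals_prefix[OF sv] unfolding svd_rank[OF sv mn, symmetric] by blast+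

section \<open>Trace duality between the nuclear and the spectral norm\<close>

lemma orth_mat_norm_preserving:
  assumes P: "orth_mat m P"
  shows "(\<Sum>a<m. (\<Sum>k<m. P$$(a,k) * c k)^2) = (\<Sum>k<m. (c k)^2)"
proof -
  have "(\<Sum>a<m. (\<Sum>k<m. P$$(a,k) * c k)^2) = (\<Sum>a<m. \<Sum>k<m. \<Sum>l<m. (P$$(a,k) * c k) * (P$$(a,l) * c l))"
    by (simp only: power2_eq_square sum_product)
  also have "\<dots> = (\<Sum>k<m. \<Sum>a<m. \<Sum>l<m. (P$$(a,k) * c k) * (P$$(a,l) * c l))" by (rule sum.swap)
  also have "\<dots> = (\<Sum>k<m. \<Sum>l<m. \<Sum>a<m. (P$$(a,k) * c k) * (P$$(a,l) * c l))"
    by (rule sum.cong[OF refl], rule sum.swap)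
  also have "\<dots> = (\<Sum>k<m. \<Sum>l<m. (c k * c l) * (\<Sum>a<m. P$$(a,k) * P$$(a,l)))"
    by (simp add: sum_distrib_left mult_ac)
  also have "\<dots> = (\<Sum>k<m. \<Sum>l<m. if l = k then c k * c l else 0)"
    by (intro sum.cong refl) (auto simp: orth_mat_cols[OF P])
  also have "\<dots> = (\<Sum>k<m. (c k)^2)" by (simp add: power2_eq_square)
  finally show ?thesis .
qed

lemma orth_mat_transpose_norm_preserving:
  assumes Q: "orth_mat n Q"
  shows "(\<Sum>k<n. (\<Sum>b<n. Q$$(b,k) * c b)^2) = (\<Sum>b<n. (c b)^2)"
proof -
  have "(\<Sum>k<n. (\<Sum>b<n. Q$$(b,k) * c b)^2) = (\<Sum>k<n. \<Sum>b<n. \<Sum>b'<n. (Q$$(b,k) * c b) * (Q$$(b',k) * c b'))"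
    by (simp only: power2_eq_square sum_product)
  also have "\<dots> = (\<Sum>b<n. \<Sum>k<n. \<Sum>b'<n. (Q$$(b,k) * c b) * (Q$$(b',k) * c b'))" by (rule sum.swap)
  also have "\<dots> = (\<Sum>b<n. \<Sum>b'<n. \<Sum>k<n. (Q$$(b,k) * c b) * (Q$$(b',k) * c b'))"
    by (rule sum.cong[OF refl], rule sum.swap)
  also have "\<dots> = (\<Sum>b<n. \<Sum>b'<n. (c b * c b') * (\<Sum>k<n. Q$$(b,k) * Q$$(b',k)))"
    by (simp add: sum_distrib_left mult_ac)
  also have "\<dots> = (\<Sum>b<n. \<Sum>b'<n. if b' = b then c b * c b' else 0)"
    by (intro sum.cong refl) (auto simp: orth_mat_rows[OF Q])
  also have "\<dots> = (\<Sum>b<n. (c b)^2)" by (simp add: power2_eq_square)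
  finally show ?thesis .
qed

lemma orth_mat_col_norm:
  assumes "orth_mat n Q" "k < n"
  shows "(\<Sum>b<n. (Q$$(b,k))^2) = 1"
  using orth_mat_cols[OF assms assms(2)] by (simp add: power2_eq_square)

text \<open>With \<open>W = P diag(t) Q\<^sup>T\<close> and \<open>y = Q\<^sup>T v\<close> one has \<open>\<parallel>W v\<parallel>\<^sup>2 = \<Sum>\<^sub>k (t\<^sub>k y\<^sub>k)\<^sup>2\<close>, so \<open>W\<close> is a
  contraction when \<open>t \<le> 1\<close>, and \<open>v\<close> is not shortened only if it lies in the span of the right
  singular vectors with singular value 1.\<close>

lemma svd_contraction:
  assumes svW: "is_svd m n W P t Q" and mn: "m \<le> n" and t1: "\<forall>k<m. t k \<le> 1"
  shows "(\<Sum>a<m. (\<Sum>b<n. W$$(a,b) * v b)^2) \<le> (\<Sum>b<n. (v b)^2)"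
    and "(\<Sum>a<m. (\<Sum>b<n. W$$(a,b) * v b)^2) = (\<Sum>b<n. (v b)^2) \<Longrightarrow> k < n \<Longrightarrow> \<not> (k < m \<and> t k = 1) \<Longrightarrow>
           (\<Sum>b<n. Q$$(b,k) * v b) = 0"
proof -
  have oP: "orth_mat m P" and oQ: "orth_mat n Q" and tnn: "\<forall>k<m. 0 \<le> t k"
    using svW unfolding is_svd_def by auto
  define y where "y = (\<lambda>k. \<Sum>b<n. Q$$(b,k) * v b)"
  define tau where "tau = (\<lambda>k. if k < m then t k else 0)"
  have tau1: "\<And>k. 0 \<le> tau k \<and> tau k \<le> 1" unfolding tau_def using t1 tnn by auto
  have Wv: "(\<Sum>b<n. W$$(a,b) * v b) = (\<Sum>k<m. P$$(a,k) * (t k * y k))" if a: "a < m" for a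
  proof -
    have "(\<Sum>b<n. W$$(a,b) * v b) = (\<Sum>b<n. \<Sum>k<m. P$$(a,k) * (t k * (Q$$(b,k) * v b)))"
      by (intro sum.cong refl, simp add: svd_index[OF svW mn a] sum_distrib_left sum_distrib_right mult_ac)
    also have "\<dots> = (\<Sum>k<m. \<Sum>b<n. P$$(a,k) * (t k * (Q$$(b,k) * v b)))" by (rule sum.swap)
    finally show ?thesis unfolding y_def by (simp add: sum_distrib_left)
  qed
  have "(\<Sum>a<m. (\<Sum>b<n. W$$(a,b) * v b)^2) = (\<Sum>k<m. (t k * y k)^2)"
    using orth_mat_norm_preserving[OF oP, of "\<lambda>k. t k * y k"] by (simp add: Wv)
  also have "\<dots> = (\<Sum>k<n. (tau k * y k)^2)"
    using sum_split_at[OF mn, of "\<lambda>k. (tau k * y k)^2"] by (simp add: tau_def)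
  finally have lhs: "(\<Sum>a<m. (\<Sum>b<n. W$$(a,b) * v b)^2) = (\<Sum>k<n. (tau k * y k)^2)" .
  have rhs: "(\<Sum>b<n. (v b)^2) = (\<Sum>k<n. (y k)^2)"
    unfolding y_def by (rule orth_mat_transpose_norm_preserving[OF oQ, symmetric])
  have gap: "(\<Sum>b<n. (v b)^2) - (\<Sum>a<m. (\<Sum>b<n. W$$(a,b) * v b)^2) = (\<Sum>k<n. (1 - (tau k)^2) * (y k)^2)"
    unfolding lhs rhs by (simp add: algebra_simps sum_subtractf power_mult_distrib)
  have nn: "\<forall>k\<in>{..<n}. 0 \<le> (1 - (tau k)^2) * (y k)^2"
    using tau1 by (auto intro!: mult_nonneg_nonneg simp: power_le_one)
  show "(\<Sum>a<m. (\<Sum>b<n. W$$(a,b) * v b)^2) \<le> (\<Sum>b<n. (v b)^2)"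
  proof -
    have "0 \<le> (\<Sum>k<n. (1 - (tau k)^2) * (y k)^2)" by (rule sum_nonneg) (use nn in blast)
    thus ?thesis using gap by linarith
  qed
  assume eq: "(\<Sum>a<m. (\<Sum>b<n. W$$(a,b) * v b)^2) = (\<Sum>b<n. (v b)^2)"
    and k: "k < n" and kJ: "\<not> (k < m \<and> t k = 1)"
  have "(1 - (tau k)^2) * (y k)^2 = 0"
    using gap eq sum_nonneg_eq_0_iff[of "{..<n}" "\<lambda>k. (1 - (tau k)^2) * (y k)^2"] nn k by auto
  moreover have "tau k \<noteq> 1" using kJ unfolding tau_def by auto
  hence "(tau k)^2 < 1" using tau1[of k] by (metis abs_of_nonneg abs_square_less_1 order_le_less)
  ultimately show "(\<Sum>b<n. Q$$(b,k) * v b) = 0" unfolding y_def by simp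
qed

lemma sing_vals_bounded_by_spec_norm:
  assumes W: "W \<in> carrier_mat m n" and mn: "m \<le> n" and sn: "spec_norm W \<le> 1" and k: "k < m"
  shows "0 \<le> sing_vals W k \<and> sing_vals W k \<le> 1"
proof -
  obtain P Q where "is_svd m n W P (sing_vals W) Q" using sing_vals_svd_exists[OF W mn] by blast
  hence "0 \<le> sing_vals W k" "sing_vals W k \<le> sing_vals W 0" using k unfolding is_svd_def by auto
  moreover have "spec_norm W = sing_vals W 0" unfolding spec_norm_def using W k by auto
  ultimately show ?thesis using sn by simp
qed

lemma mat_inner_svd:
  assumes sv: "is_svd m n X U s V" and mn: "m \<le> n"
  shows "mat_inner W X = (\<Sum>i<m. s i * (\<Sum>a<m. U$$(a,i) * (\<Sum>b<n. W$$(a,b) * V$$(b,i))))"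
proof -
  have X: "X \<in> carrier_mat m n" using sv unfolding is_svd_def by blast
  have "mat_inner W X = (\<Sum>a<m. \<Sum>b<n. \<Sum>i<m. s i * (U$$(a,i) * (W$$(a,b) * V$$(b,i))))"
  proof -
    have "dim_row X = m" "dim_col X = n" using X by auto
    thus ?thesis unfolding mat_inner_def
      by (intro sum.cong refl) (simp_all add: svd_index[OF sv mn] sum_distrib_left mult_ac)
  qed
  also have "\<dots> = (\<Sum>a<m. \<Sum>i<m. \<Sum>b<n. s i * (U$$(a,i) * (W$$(a,b) * V$$(b,i))))"
    by (rule sum.cong[OF refl], rule sum.swap)
  also have "\<dots> = (\<Sum>i<m. \<Sum>a<m. \<Sum>b<n. s i * (U$$(a,i) * (W$$(a,b) * V$$(b,i))))"
    by (rule sum.swap)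
  finally show ?thesis by (simp add: sum_distrib_left)
qed

lemma svd_sing_vec_bilinear:
  assumes sv: "is_svd m n W U w V" and mn: "m \<le> n" and i: "i < m"
  shows "(\<Sum>a<m. U$$(a,i) * (\<Sum>b<n. W$$(a,b) * V$$(b,i))) = w i"
proof -
  have oU: "orth_mat m U" and oV: "orth_mat n V" using sv unfolding is_svd_def by auto
  have "(\<Sum>b<n. W$$(a,b) * V$$(b,i)) = U$$(a,i) * w i" if a: "a < m" for a
  proof -
    have "(\<Sum>b<n. W$$(a,b) * V$$(b,i)) = (\<Sum>b<n. V$$(b,i) * (\<Sum>q<m. V$$(b,0+q) * (U$$(a,q) * w q)))"
      by (intro sum.cong refl) (simp add: svd_index[OF sv mn a] mult_ac)
    also have "\<dots> = U$$(a,i) * w i" using orth_coord[OF oV, of i 0 m] i mn by simp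
    finally show ?thesis .
  qed
  hence "(\<Sum>a<m. U$$(a,i) * (\<Sum>b<n. W$$(a,b) * V$$(b,i))) = w i * (\<Sum>a<m. (U$$(a,i))^2)"
    by (simp add: sum_distrib_left power2_eq_square mult_ac)
  thus ?thesis using orth_mat_col_norm[OF oU i] by simp
qed

lemma two_mult_sum_le:
  fixes u h :: "nat \<Rightarrow> real"
  assumes "(\<Sum>a<m. (u a)^2) = 1"
  shows "2 * (\<Sum>a<m. u a * h a) \<le> 1 + (\<Sum>a<m. (h a)^2)"
proof -
  have "0 \<le> (\<Sum>a<m. (u a - h a)^2)" by (intro sum_nonneg) auto
  also have "\<dots> = (\<Sum>a<m. (u a)^2) + (\<Sum>a<m. (h a)^2) - 2 * (\<Sum>a<m. u a * h a)"
    by (simp add: power2_diff sum.distrib sum_subtractf sum_distrib_left mult_ac)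
  finally show ?thesis using assms by simp
qed

text \<open>The squares \<open>(y i k)\<^sup>2\<close> form a doubly stochastic matrix; if its first \<open>r\<close> rows are supported
  in \<open>J\<close>, their total mass \<open>r\<close> is at most the mass \<open>card J\<close> of the columns in \<open>J\<close>.\<close>

lemma card_ge_of_doubly_stochastic_support:
  fixes y :: "nat \<Rightarrow> nat \<Rightarrow> real"
  assumes rn: "r \<le> n" and J: "J \<subseteq> {..<n}"
    and rows: "\<And>i. i < r \<Longrightarrow> (\<Sum>k<n. (y i k)^2) = 1"
    and cols: "\<And>k. k < n \<Longrightarrow> (\<Sum>i<n. (y i k)^2) = 1"
    and supp: "\<And>i k. i < r \<Longrightarrow> k < n \<Longrightarrow> k \<notin> J \<Longrightarrow> y i k = 0"
  shows "r \<le> card J"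
proof -
  have "real r = (\<Sum>i<r. \<Sum>k<n. (y i k)^2)" using rows by simp
  also have "\<dots> = (\<Sum>i<r. \<Sum>k\<in>J. (y i k)^2)"
    using supp by (intro sum.cong refl sum.mono_neutral_right[OF _ J]) auto
  also have "\<dots> = (\<Sum>k\<in>J. \<Sum>i<r. (y i k)^2)" by (rule sum.swap)
  also have "\<dots> \<le> (\<Sum>k\<in>J. \<Sum>i<n. (y i k)^2)"
    using rn by (intro sum_mono sum_mono2) auto
  also have "\<dots> = real (card J)" using J cols by (simp add: subset_iff)
  finally show ?thesis by simp
qed

lemma rank_le_card_sing_vals_eq_one:
  assumes X: "X \<in> carrier_mat m n" and W: "W \<in> carrier_mat m n" and mn: "m \<le> n"
    and eq: "nuc_norm X - mat_inner W X = 0" and sn: "spec_norm W \<le> 1"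
  shows "mrank X \<le> card {k. k < m \<and> sing_vals W k = 1}"
proof -
  define s where "s = sing_vals X"
  obtain U V where svX: "is_svd m n X U s V" using sing_vals_svd_exists[OF X mn] unfolding s_def by blast
  obtain P Q where svW: "is_svd m n W P (sing_vals W) Q" using sing_vals_svd_exists[OF W mn] by blast
  have oU: "orth_mat m U" and oV: "orth_mat n V" and oQ: "orth_mat n Q" and snn: "\<And>i. i < m \<Longrightarrow> s i \<ge> 0"
    using svX svW unfolding is_svd_def by auto
  have t1: "\<forall>k<m. sing_vals W k \<le> 1" using sing_vals_bounded_by_spec_norm[OF W mn sn] by blast
  define g where "g = (\<lambda>i. \<Sum>a<m. U$$(a,i) * (\<Sum>b<n. W$$(a,b) * V$$(b,i)))"
  define H where "H = (\<lambda>i. \<Sum>a<m. (\<Sum>b<n. W$$(a,b) * V$$(b,i))^2)"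
  have H1: "H i \<le> 1" if "i < m" for i
    using svd_contraction(1)[OF svW mn t1, of "\<lambda>b. V$$(b,i)"] orth_mat_col_norm[OF oV] that mn
    unfolding H_def by simp
  have g2: "2 * g i \<le> 1 + H i" if "i < m" for i
    unfolding g_def H_def by (rule two_mult_sum_le[OF orth_mat_col_norm[OF oU that]])
  have "(\<Sum>i<m. s i * (1 - g i)) = 0"
    using eq unfolding nuc_norm_def mat_inner_svd[OF svX mn] g_def s_def[symmetric]
    using X by (simp add: algebra_simps sum_subtractf)
  moreover have "\<forall>i\<in>{..<m}. 0 \<le> s i * (1 - g i)" using snn g2 H1 by force
  ultimately have zero: "s i * (1 - g i) = 0" if "i < m" for i
    using sum_nonneg_eq_0_iff[of "{..<m}" "\<lambda>i. s i * (1 - g i)"] that by auto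
  have H_one: "H i = 1" if i: "i < mrank X" for i
  proof -
    have im: "i < m" using i svd_pos_iff_less_mrank(2)[OF svX mn] by simp
    hence "s i > 0" using svd_pos_iff_less_mrank(1)[OF svX mn] i by blast
    hence "g i = 1" using zero[OF im] by simp
    thus ?thesis using g2[OF im] H1[OF im] by simp
  qed
  define J where "J = {k. k < m \<and> sing_vals W k = 1}"
  show ?thesis unfolding J_def[symmetric]
  proof (rule card_ge_of_doubly_stochastic_support[where y = "\<lambda>i k. \<Sum>b<n. Q$$(b,k) * V$$(b,i)"])
    show "mrank X \<le> n" using svd_pos_iff_less_mrank(2)[OF svX mn] mn by simp
    show "J \<subseteq> {..<n}" unfolding J_def using mn by auto
    show "(\<Sum>k<n. (\<Sum>b<n. Q$$(b,k) * V$$(b,i))^2) = 1" if "i < mrank X" for i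
      using orth_mat_transpose_norm_preserving[OF oQ] orth_mat_col_norm[OF oV] that
        svd_pos_iff_less_mrank(2)[OF svX mn] mn by simp
    show "(\<Sum>i<n. (\<Sum>b<n. Q$$(b,k) * V$$(b,i))^2) = 1" if "k < n" for k
      using orth_mat_transpose_norm_preserving[OF oV, of "\<lambda>b. Q$$(b,k)"] orth_mat_col_norm[OF oQ that]
      by (simp add: mult.commute)
    show "(\<Sum>b<n. Q$$(b,k) * V$$(b,i)) = 0" if "i < mrank X" "k < n" "k \<notin> J" for i k
    proof (rule svd_contraction(2)[OF svW mn t1])
      have "i < m" using that(1) svd_pos_iff_less_mrank(2)[OF svX mn] by simp
      thus "(\<Sum>a<m. (\<Sum>b<n. W$$(a,b) * V$$(b,i))^2) = (\<Sum>b<n. (V$$(b,i))^2)"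
        using H_one[OF that(1)] orth_mat_col_norm[OF oV] mn unfolding H_def by simp
    qed (use that in \<open>auto simp: J_def\<close>)
  qed
qed

section \<open>The dual certificate\<close>

definition dual_certificate :: "nat \<Rightarrow> nat \<Rightarrow> real \<Rightarrow> real mat \<Rightarrow> real mat \<Rightarrow> nat \<Rightarrow> real mat" where
  "dual_certificate m n t U V r = col_block U 0 r * transpose_mat (col_block V 0 r) +
     t \<cdot>\<^sub>m (col_block U r m * rect_diag (m - r) (n - r) (\<lambda>_. 1) * transpose_mat (col_block V r n))"

lemma dual_certificate_eq:
  assumes U: "U \<in> carrier_mat m m" and V: "V \<in> carrier_mat n n" and mn: "m \<le> n" and rm: "r \<le> m"
  shows "dual_certificate m n t U V r =
    U * rect_diag m n (\<lambda>i. if i < r then 1 else if i < m then t else 0) * transpose_mat V"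
    (is "_ = U * rect_diag m n ?w * _")
proof -
  define U1 V1 U2 V2 where "U1 = col_block U 0 r" "V1 = col_block V 0 r"
    "U2 = col_block U r m" "V2 = col_block V r n"
  have U1: "U1 \<in> carrier_mat m r" and V1: "V1 \<in> carrier_mat n r"
    and U2: "U2 \<in> carrier_mat m (m - r)" and V2: "V2 \<in> carrier_mat n (n - r)"
    using U V unfolding U1_V1_U2_V2_def col_block_def by auto
  show ?thesis unfolding dual_certificate_def U1_V1_U2_V2_def[symmetric]
  proof (rule eq_matI)
    fix a b assume "a < dim_row (U * rect_diag m n ?w * transpose_mat V)"
      and "b < dim_col (U * rect_diag m n ?w * transpose_mat V)"
    hence a: "a < m" and b: "b < n" using U V by (auto simp: rect_diag_def)
    have e1: "(U1 * transpose_mat V1) $$ (a,b) = (\<Sum>i<r. U$$(a,i) * V$$(b,i))"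
      using a b U1 V1 U V by (simp add: U1_V1_U2_V2_def col_block_def scalar_prod_def atLeast0LessThan)
    have "(U2 * rect_diag (m - r) (n - r) (\<lambda>_. 1) * transpose_mat V2) $$ (a,b)
        = (\<Sum>p<m-r. U2$$(a,p) * 1 * V2$$(b,p))"
      using mn by (intro index_mult_rect_diag_transpose[OF U2 V2 _ a b]) simp
    also have "\<dots> = (\<Sum>p<m-r. U$$(a,r+p) * V$$(b,r+p))"
      using a b U V mn by (intro sum.cong) (auto simp: U1_V1_U2_V2_def col_block_def)
    finally have e2: "(U2 * rect_diag (m - r) (n - r) (\<lambda>_. 1) * transpose_mat V2) $$ (a,b)
        = (\<Sum>p<m-r. U$$(a,r+p) * V$$(b,r+p))" .
    have "(U1 * transpose_mat V1 + t \<cdot>\<^sub>m (U2 * rect_diag (m - r) (n - r) (\<lambda>_. 1) * transpose_mat V2)) $$ (a,b)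
        = (\<Sum>i<r. U$$(a,i) * V$$(b,i)) + t * (\<Sum>p<m-r. U$$(a,r+p) * V$$(b,r+p))"
      using a b U1 V1 U2 V2 e1 e2 by (simp add: rect_diag_def)
    also have "\<dots> = (\<Sum>i<r. U$$(a,i) * ?w i * V$$(b,i)) + (\<Sum>p<m-r. U$$(a,r+p) * ?w (r+p) * V$$(b,r+p))"
      by (simp add: sum_distrib_left mult_ac) (intro sum.cong, auto)
    also have "\<dots> = (\<Sum>i<m. U$$(a,i) * ?w i * V$$(b,i))" by (rule sum_split_at[OF rm, symmetric])
    also have "\<dots> = (U * rect_diag m n ?w * transpose_mat V) $$ (a,b)"
      using index_mult_rect_diag_transpose[OF U V mn a b] by simp
    finally show "(U1 * transpose_mat V1 + t \<cdot>\<^sub>m (U2 * rect_diag (m - r) (n - r) (\<lambda>_. 1) * transpose_mat V2)) $$ (a,b)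
        = (U * rect_diag m n ?w * transpose_mat V) $$ (a,b)" .
  qed (use U1 V1 U2 V2 U V in \<open>auto simp: rect_diag_def\<close>)
qed

lemma dual_certificate_svd:
  assumes oU: "orth_mat m U" and oV: "orth_mat n V" and mn: "m \<le> n" and rm: "r \<le> m"
    and t: "0 \<le> t" "t \<le> 1"
  shows "is_svd m n (dual_certificate m n t U V r) U (\<lambda>i. if i < r then 1 else if i < m then t else 0) V"
proof -
  have U: "U \<in> carrier_mat m m" and V: "V \<in> carrier_mat n n" using oU oV by (simp_all add: orth_mat_carrier)
  show ?thesis
    unfolding is_svd_def dual_certificate_eq[OF U V mn rm] using U V oU oV t rm
    by (auto simp: rect_diag_def)
qed

lemma mat_inner_common_svd:
  assumes svW: "is_svd m n W U w V" and svX: "is_svd m n X U s V" and mn: "m \<le> n"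
  shows "mat_inner W X = (\<Sum>i<m. s i * w i)"
  unfolding mat_inner_svd[OF svX mn] using svd_sing_vec_bilinear[OF svW mn] by simp

lemma dual_certificate_attains_nuc_norm:
  assumes svX: "is_svd m n X U (sing_vals X) V" and mn: "m \<le> n" and t: "0 \<le> t" "t < 1"
  defines "W \<equiv> dual_certificate m n t U V (mrank X)"
  shows "W \<in> carrier_mat m n" and "nuc_norm X - mat_inner W X = 0" and "spec_norm W \<le> 1"
    and "sing_vals W = (\<lambda>i. if i < mrank X then 1 else if i < m then t else 0)"
proof -
  have oU: "orth_mat m U" and oV: "orth_mat n V" and X: "X \<in> carrier_mat m n"
    and snn: "\<forall>i<m. 0 \<le> sing_vals X i" using svX unfolding is_svd_def by auto
  note rm = svd_pos_iff_less_mrank(2)[OF svX mn]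
  have svW: "is_svd m n W U (\<lambda>i. if i < mrank X then 1 else if i < m then t else 0) V"
    unfolding W_def using dual_certificate_svd[OF oU oV mn rm] t by simp
  show "sing_vals W = (\<lambda>i. if i < mrank X then 1 else if i < m then t else 0)"
    by (rule sing_vals_eqI[OF svW mn])
  thus "spec_norm W \<le> 1" unfolding spec_norm_def using t by auto
  show "W \<in> carrier_mat m n" using svW unfolding is_svd_def by blast
  \<comment> \<open>The weights are 1 exactly where \<open>\<sigma>(X)\<close> is positive.\<close>
  have "sing_vals X i * (if i < mrank X then 1 else if i < m then t else 0) = sing_vals X i"
    if "i < m" for i
    using svd_pos_iff_less_mrank(1)[OF svX mn that] snn that by auto
  hence "mat_inner W X = nuc_norm X"
    unfolding mat_inner_common_svd[OF svW svX mn] nuc_norm_def using X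
    by (intro sum.cong) auto
  thus "nuc_norm X - mat_inner W X = 0" by simp
qed

section \<open>Exactness of the relaxation\<close>

lemma sum_one_ereal: "(\<Sum>i\<in>J. (1::ereal)) = ereal (real (card J))"
proof -
  have "(\<Sum>i\<in>J. (1::ereal)) = ereal (\<Sum>i\<in>J. 1)" unfolding one_ereal_def by (rule sum_ereal)
  thus ?thesis by simp
qed

lemma Phi_sum_sing_vals_ge_rank:
  assumes phi: "Phi_class \<phi> ts"
    and X: "X \<in> carrier_mat m n" and W: "W \<in> carrier_mat m n" and mn: "m \<le> n"
    and eq: "nuc_norm X - mat_inner W X = 0" and sn: "spec_norm W \<le> 1"
  shows "ereal (real (mrank X)) \<le> (\<Sum>i<m. \<phi> (sing_vals W i))"
proof -
  define J where "J = {k. k < m \<and> sing_vals W k = 1}"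
  have phi1: "\<phi> 1 = 1" and phinn: "\<And>t. 0 \<le> t \<Longrightarrow> t \<le> 1 \<Longrightarrow> 0 \<le> \<phi> t"
    using phi unfolding Phi_class_def by auto
  have "ereal (real (mrank X)) \<le> ereal (real (card J))"
    using rank_le_card_sing_vals_eq_one[OF X W mn eq sn] unfolding J_def by simp
  also have "\<dots> = (\<Sum>i\<in>J. \<phi> (sing_vals W i))"
    unfolding sum_one_ereal[symmetric] by (rule sum.cong[OF refl]) (simp add: J_def phi1)
  also have "\<dots> \<le> (\<Sum>i<m. \<phi> (sing_vals W i))"
    using sing_vals_bounded_by_spec_norm[OF W mn sn] phinn
    by (intro sum_mono2) (auto simp: J_def)
  finally show ?thesis .
qed

lemma Phi_sum_dual_certificate:
  assumes phi: "Phi_class \<phi> ts" and svX: "is_svd m n X U (sing_vals X) V" and mn: "m \<le> n"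
  shows "(\<Sum>i<m. \<phi> (sing_vals (dual_certificate m n ts U V (mrank X)) i)) = ereal (real (mrank X))"
proof -
  have phi1: "\<phi> 1 = 1" and phits: "\<phi> ts = 0" and ts: "0 \<le> ts" "ts < 1"
    using phi unfolding Phi_class_def by auto
  note rm = svd_pos_iff_less_mrank(2)[OF svX mn]
  have "(\<Sum>i<m. \<phi> (sing_vals (dual_certificate m n ts U V (mrank X)) i))
      = (\<Sum>i<m. if i < mrank X then 1 else 0)"
    unfolding dual_certificate_attains_nuc_norm(4)[OF svX mn ts] by (intro sum.cong) (auto simp: phi1 phits)
  also have "\<dots> = (\<Sum>i\<in>{..<mrank X}. 1)"
  proof -
    have "{..<m} \<inter> {i. i < mrank X} = {..<mrank X}" using rm by auto
    thus ?thesis by (simp add: sum.If_cases)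
  qed
  finally show ?thesis by (simp add: sum_one_ereal)
qed

theorem lemma4p1:
  fixes n1 n2 :: nat and \<phi> :: "real \<Rightarrow> ereal" and ts :: real
    and f :: "real mat \<Rightarrow> ereal" and \<Omega> :: "real mat set" and \<delta> :: real
  defines "feas \<equiv> {X \<in> \<Omega>. f X \<le> ereal \<delta>}"
  defines "rank_opt \<equiv> (\<lambda>X. X \<in> feas \<and> (\<forall>Y\<in>feas. mrank X \<le> mrank Y))"
  defines "Qfeas \<equiv> (\<lambda>X W. X \<in> carrier_mat n1 n2 \<and> W \<in> carrier_mat n1 n2 \<and>
              nuc_norm X - mat_inner W X = 0 \<and> spec_norm W \<le> 1 \<and> X \<in> \<Omega> \<and> f X \<le> ereal \<delta>)"
  defines "Qobj \<equiv> (\<lambda>W. \<Sum>i<n1. \<phi> (sing_vals W i))"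
  defines "Q_opt \<equiv> (\<lambda>X W. Qfeas X W \<and> (\<forall>X' W'. Qfeas X' W' \<longrightarrow> Qobj W \<le> Qobj W'))"
  assumes phi: "Phi_class \<phi> ts"
    and f: "mat_proper_lsc n1 n2 f"
    and Omega: "mat_closed n1 n2 \<Omega>"
    and dims: "n1 \<le> n2"
    and delta: "\<delta> > 0"
    and solvable: "\<exists>X. rank_opt X"
  shows "(\<forall>X U V. rank_opt X \<longrightarrow> is_svd n1 n2 X U (sing_vals X) V \<longrightarrow>
            (let r = mrank X;
                 U1 = col_block U 0 r; V1 = col_block V 0 r;
                 U2 = col_block U r n1; V2 = col_block V r n2
             in Q_opt X (U1 * transpose_mat V1 +
                   ts \<cdot>\<^sub>m (U2 * rect_diag (n1 - r) (n2 - r) (\<lambda>_. 1) * transpose_mat V2))))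
       \<and> (\<forall>X W. Q_opt X W \<longrightarrow> rank_opt X)"
proof -
  have ts: "0 \<le> ts" "ts < 1" using phi unfolding Phi_class_def by auto
  have feas_carrier: "X \<in> feas \<Longrightarrow> X \<in> carrier_mat n1 n2" for X
    using Omega unfolding feas_def mat_closed_def by auto
  have lower: "Qfeas X W \<Longrightarrow> X \<in> feas \<and> ereal (real (mrank X)) \<le> Qobj W" for X W
    unfolding Qfeas_def Qobj_def feas_def using Phi_sum_sing_vals_ge_rank[OF phi _ _ dims] by auto
  have attained: "Qfeas X (dual_certificate n1 n2 ts U V (mrank X)) \<and>
      Qobj (dual_certificate n1 n2 ts U V (mrank X)) = ereal (real (mrank X))"
    if "X \<in> feas" "is_svd n1 n2 X U (sing_vals X) V" for X U V
    using that feas_carrier dual_certificate_attains_nuc_norm(1-3)[OF that(2) dims ts]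
      Phi_sum_dual_certificate[OF phi that(2) dims]
    unfolding Qfeas_def Qobj_def feas_def by auto
  have "Q_opt X (dual_certificate n1 n2 ts U V (mrank X))"
    if X: "rank_opt X" and svX: "is_svd n1 n2 X U (sing_vals X) V" for X U V
    using attained[OF _ svX] lower X unfolding Q_opt_def rank_opt_def
    by (metis (no_types, lifting) ereal_less_eq(3) of_nat_le_iff order.trans)
  moreover have "rank_opt X" if Q: "Q_opt X W" for X W
  proof -
    obtain Xs where Xs: "rank_opt Xs" using solvable by blast
    then obtain U V where "is_svd n1 n2 Xs U (sing_vals Xs) V"
      using sing_vals_svd_exists[OF feas_carrier dims] unfolding rank_opt_def by blast
    hence "Qobj W \<le> ereal (real (mrank Xs))" using attained Xs Q unfolding Q_opt_def rank_opt_def by metis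
    thus ?thesis using lower Q Xs unfolding Q_opt_def rank_opt_def
      by (metis (no_types, lifting) ereal_less_eq(3) of_nat_le_iff order.trans)
  qed
  ultimately show ?thesis unfolding Let_def dual_certificate_def by blast
qed

end
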